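(* Let $d\ge3$, let $G$ be a $d$-map and let $(W_1,\dots,W_d)$ be a $d$-tuple of sets of arcs of $G$ satisfying conditions (W0), (W1) and (W2) below (in particular, any $d$-GS wood). Then for every $i\in[d]$, $W_i$ is (the set of arcs of) a spanning tree of $G$ oriented toward its root $v_i$, i.e. the underlying edges form a spanning tree and every arc is oriented from child to parent.
   Context: A plane map is a connected graph (loops, multiple edges allowed) embedded in the plane without crossings, up to deformation; outer (unbounded) face, inner faces; outer vertices/edges lie on the outer face; $\deg(f)$ = number of corners of a face. For $d\ge3$, a $d$-map is a plane map with inner faces of degree $\le d$ and outer face of degree $d$ bounded by a simple cycle, with outer vertices $v_1,\dots,v_d$ in clockwise order (indices mod $d$). An arc is a directed edge. Conditions: (W0) for each $i\in[d]$, every vertex $v\ne v_i$ has exactly one outgoing arc in $W_i$ and $v_i$ has none; for $k\ne i$ the arc of $W_i$ out of $v_k$ is the outer arc $v_k\to v_{k+1}$; $W_i$ contains no inner arc oriented toward $v_i$ or $v_{i+1}$. (W1) For each inner vertex $v$ with outgoing arcs $a_1,\dots,a_d$ in $W_1,\dots,W_d$, these are not all equal and appear in clockwise order around $v$ (equalities $a_i=a_{i+1}$ allowed). (W2) With $v$ and $a_1,\dots,a_d$ as in (W1), any arc $a\in W_i$ oriented toward $v$ appears strictly between $a_{i+1}$ and $a_{i-1}$ in clockwise order around $v$. (Sector convention: the clockwise sector from $a_p$ to $a_q$ passes through $a_{p+1},\dots,a_q$; empty if all equal, full turn if not all equal but $a_p=a_q$; strictly between = interior of the sector and not on the edges of $a_p$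 or $a_q$.) A $d$-GS wood is a tuple satisfying (W0)–(W2) and an additional condition (W3). *)

theory Defs
  imports Main
begin

text \<open>
  A plane map is encoded by a finite set H of darts (arcs = directed edges),
  a fixed-point-free involution opp (the reverse arc of the same edge) and a
  permutation nxt of H giving, for each dart, the next dart CLOCKWISE around
  its tail vertex.  With nxt clockwise, the orbit of phi
  through a dart h is the face on the left of h; inner faces are traversed
  counterclockwise and the outer face clockwise.  Planarity (genus 0) of the
  connected map is expressed by Euler's formula.
\<close>

definition tail :: "('a \<Rightarrow> 'a) \<Rightarrow> 'a \<Rightarrow> 'a set" where
  "tail nxt h = {(nxt ^^ k) h | k. True}"

definition head :: "('a \<Rightarrow> 'a) \<Rightarrow> ('a \<Rightarrow> 'a) \<Rightarrow> 'a \<Rightarrow> 'a set" where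
  "head opp nxt h = tail nxt (opp h)"

definition phi :: "('a \<Rightarrow> 'a) \<Rightarrow> ('a \<Rightarrow> 'a) \<Rightarrow> 'a \<Rightarrow> 'a" where
  "phi opp nxt = nxt \<circ> opp"

definition face :: "('a \<Rightarrow> 'a) \<Rightarrow> ('a \<Rightarrow> 'a) \<Rightarrow> 'a \<Rightarrow> 'a set" where
  "face opp nxt h = {(phi opp nxt ^^ k) h | k. True}"

definition vertices :: "'a set \<Rightarrow> ('a \<Rightarrow> 'a) \<Rightarrow> 'a set set" where
  "vertices H nxt = tail nxt ` H"

definition edges :: "'a set \<Rightarrow> ('a \<Rightarrow> 'a) \<Rightarrow> 'a set set" where
  "edges H opp = (\<lambda>h. {h, opp h}) ` H"

definition faces :: "'a set \<Rightarrow> ('a \<Rightarrow> 'a) \<Rightarrow> ('a \<Rightarrow> 'a) \<Rightarrow> 'a set set" where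
  "faces H opp nxt = face opp nxt ` H"

definition plane_map :: "'a set \<Rightarrow> ('a \<Rightarrow> 'a) \<Rightarrow> ('a \<Rightarrow> 'a) \<Rightarrow> bool" where
  "plane_map H opp nxt \<longleftrightarrow>
     finite H \<and>
     (\<forall>h\<in>H. opp h \<in> H \<and> opp h \<noteq> h \<and> opp (opp h) = h) \<and>
     bij_betw nxt H H \<and>
     (\<forall>h\<in>H. \<forall>h'\<in>H. (h, h') \<in> ({(x, opp x) | x. x \<in> H} \<union> {(x, nxt x) | x. x \<in> H})\<^sup>*) \<and>
     int (card (vertices H nxt)) - int (card (edges H opp)) + int (card (faces H opp nxt)) = 2"

text \<open>
  A d-map: the outer face is the phi-orbit of the darts ou 0, ..., ou (d-1),
  where ou k is the outer arc from v_k to v_(k+1) (indices mod d, we use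
  0..d-1 instead of 1..d).
\<close>

definition outer_vertex :: "('a \<Rightarrow> 'a) \<Rightarrow> (nat \<Rightarrow> 'a) \<Rightarrow> nat \<Rightarrow> 'a set" where
  "outer_vertex nxt ou k = tail nxt (ou k)"

definition d_map :: "nat \<Rightarrow> 'a set \<Rightarrow> ('a \<Rightarrow> 'a) \<Rightarrow> ('a \<Rightarrow> 'a) \<Rightarrow> (nat \<Rightarrow> 'a) \<Rightarrow> bool" where
  "d_map d H opp nxt ou \<longleftrightarrow>
     3 \<le> d \<and> plane_map H opp nxt \<and>
     (\<forall>k<d. ou k \<in> H) \<and>
     (\<forall>k<d. phi opp nxt (ou k) = ou (Suc k mod d)) \<and>
     inj_on (\<lambda>k. tail nxt (ou k)) {..<d} \<and>
     (\<forall>h\<in>H. face opp nxt h \<noteq> face opp nxt (ou 0) \<longrightarrow> card (face opp nxt h) \<le> d)"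

definition outer_darts :: "nat \<Rightarrow> (nat \<Rightarrow> 'a) \<Rightarrow> 'a set" where
  "outer_darts d ou = ou ` {..<d}"

definition outer_vertices :: "nat \<Rightarrow> ('a \<Rightarrow> 'a) \<Rightarrow> (nat \<Rightarrow> 'a) \<Rightarrow> 'a set set" where
  "outer_vertices d nxt ou = (\<lambda>k. tail nxt (ou k)) ` {..<d}"

definition inner_arc :: "nat \<Rightarrow> ('a \<Rightarrow> 'a) \<Rightarrow> (nat \<Rightarrow> 'a) \<Rightarrow> 'a \<Rightarrow> bool" where
  "inner_arc d opp ou h \<longleftrightarrow> h \<notin> outer_darts d ou \<and> opp h \<notin> outer_darts d ou"

definition W0 :: "nat \<Rightarrow> 'a set \<Rightarrow> ('a \<Rightarrow> 'a) \<Rightarrow> ('a \<Rightarrow> 'a) \<Rightarrow> (nat \<Rightarrow> 'a) \<Rightarrow> (nat \<Rightarrow> 'a set) \<Rightarrow> bool" where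
  "W0 d H opp nxt ou W \<longleftrightarrow>
     (\<forall>i<d.
        W i \<subseteq> H \<and>
        (\<forall>u\<in>vertices H nxt. u \<noteq> outer_vertex nxt ou i \<longrightarrow> card {h\<in>W i. tail nxt h = u} = 1) \<and>
        {h\<in>W i. tail nxt h = outer_vertex nxt ou i} = {} \<and>
        (\<forall>k<d. k \<noteq> i \<longrightarrow> ou k \<in> W i) \<and>
        (\<forall>h\<in>W i. inner_arc d opp ou h \<longrightarrow>
            head opp nxt h \<noteq> outer_vertex nxt ou i \<and>
            head opp nxt h \<noteq> outer_vertex nxt ou (Suc i mod d)))"

definition outarc :: "('a \<Rightarrow> 'a) \<Rightarrow> (nat \<Rightarrow> 'a set) \<Rightarrow> nat \<Rightarrow> 'a set \<Rightarrow> 'a" where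
  "outarc nxt W j u = (THE h. h \<in> W j \<and> tail nxt h = u)"

definition cw_dist :: "('a \<Rightarrow> 'a) \<Rightarrow> 'a \<Rightarrow> 'a \<Rightarrow> nat" where
  "cw_dist nxt x y = (LEAST k. (nxt ^^ k) x = y)"

text \<open>(W1): a_1..a_d not all equal and in clockwise order around v, i.e.
  going clockwise from a_1 through a_2, ..., a_d back to a_1 makes exactly
  one full turn (steps of length 0 allowed for equal arcs).\<close>
definition W1 :: "nat \<Rightarrow> 'a set \<Rightarrow> ('a \<Rightarrow> 'a) \<Rightarrow> ('a \<Rightarrow> 'a) \<Rightarrow> (nat \<Rightarrow> 'a) \<Rightarrow> (nat \<Rightarrow> 'a set) \<Rightarrow> bool" where
  "W1 d H opp nxt ou W \<longleftrightarrow>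
     (\<forall>u\<in>vertices H nxt. u \<notin> outer_vertices d nxt ou \<longrightarrow>
        (\<exists>j<d. outarc nxt W j u \<noteq> outarc nxt W 0 u) \<and>
        (\<Sum>j<d. cw_dist nxt (outarc nxt W j u) (outarc nxt W (Suc j mod d) u)) = card u)"

text \<open>(W2): the clockwise sector from a_(i+1) to a_(i-1) passes through
  a_(i+2), ..., a_(i-1); its angular size is the sum of the d-2 clockwise
  steps.  An arc of W i entering v (seen at v as the dart opp h) must lie
  strictly inside this sector and not on the edges of a_(i+1), a_(i-1).\<close>
definition W2 :: "nat \<Rightarrow> 'a set \<Rightarrow> ('a \<Rightarrow> 'a) \<Rightarrow> ('a \<Rightarrow> 'a) \<Rightarrow> (nat \<Rightarrow> 'a) \<Rightarrow> (nat \<Rightarrow> 'a set) \<Rightarrow> bool" where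
  "W2 d H opp nxt ou W \<longleftrightarrow>
     (\<forall>u\<in>vertices H nxt. u \<notin> outer_vertices d nxt ou \<longrightarrow>
       (\<forall>i<d. \<forall>h\<in>W i. head opp nxt h = u \<longrightarrow>
          (let a = (\<lambda>j. outarc nxt W j u);
               p = Suc i mod d; q = (i + d - 1) mod d;
               D = (\<Sum>t<d-2. cw_dist nxt (a ((i + 1 + t) mod d)) (a ((i + 2 + t) mod d)));
               x = opp h
           in 0 < cw_dist nxt (a p) x \<and> cw_dist nxt (a p) x < D \<and>
              x \<notin> {a p, opp (a p), a q, opp (a q)})))"

definition dir_rel :: "('a \<Rightarrow> 'a) \<Rightarrow> ('a \<Rightarrow> 'a) \<Rightarrow> 'a set \<Rightarrow> ('a set \<times> 'a set) set" where
  "dir_rel opp nxt W = {(tail nxt h, head opp nxt h) | h. h \<in> W}"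

text \<open>A cycle in the undirected (multi)graph of the edges of W: a closed walk
  of length \<ge> 1 using pairwise distinct edges and visiting pairwise distinct
  vertices (a loop is a cycle of length 1).\<close>
definition has_cycle :: "('a \<Rightarrow> 'a) \<Rightarrow> ('a \<Rightarrow> 'a) \<Rightarrow> 'a set \<Rightarrow> bool" where
  "has_cycle opp nxt W \<longleftrightarrow>
     (\<exists>hs. hs \<noteq> [] \<and> set hs \<subseteq> W \<union> opp ` W \<and>
        distinct (map (\<lambda>h. {h, opp h}) hs) \<and>
        distinct (map (tail nxt) hs) \<and>
        (\<forall>j<length hs. head opp nxt (hs ! j) = tail nxt (hs ! (Suc j mod length hs))))"

definition spanning_tree_toward ::
  "'a set \<Rightarrow> ('a \<Rightarrow> 'a) \<Rightarrow> ('a \<Rightarrow> 'a) \<Rightarrow> 'a set \<Rightarrow> 'a set \<Rightarrow> bool" where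
  "spanning_tree_toward H opp nxt W r \<longleftrightarrow>
     W \<subseteq> H \<and>
     (\<forall>h\<in>W. opp h \<notin> W) \<and>
     \<comment> \<open>underlying undirected edges: connected, spanning, acyclic\<close>
     (\<forall>u\<in>vertices H nxt. (u, r) \<in> (dir_rel opp nxt W \<union> (dir_rel opp nxt W)\<inverse>)\<^sup>*) \<and>
     \<not> has_cycle opp nxt W \<and>
     \<comment> \<open>orientation toward the root: every vertex reaches r along arcs of W\<close>
     (\<forall>u\<in>vertices H nxt. (u, r) \<in> (dir_rel opp nxt W)\<^sup>*)"

end

theory Submission
  imports Defs "HOL-Combinatorics.Transposition"
begin

definition cycle_of :: "('a \<Rightarrow> 'a) \<Rightarrow> 'a \<Rightarrow> 'a set" where
  "cycle_of f x = {(f ^^ k) x | k. True}"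

definition num_cycles :: "('a \<Rightarrow> 'a) \<Rightarrow> 'a set \<Rightarrow> nat" where
  "num_cycles f S = card (cycle_of f ` S)"

definition period :: "('a \<Rightarrow> 'a) \<Rightarrow> 'a \<Rightarrow> nat" where
  "period f x = (LEAST n. 0 < n \<and> (f ^^ n) x = x)"

lemma cycle_of_self [simp]: "x \<in> cycle_of f x"
  unfolding cycle_of_def by (auto intro: exI[of _ 0])

lemma funpow_in_cycle_of [simp]: "(f ^^ k) x \<in> cycle_of f x"
  unfolding cycle_of_def by auto

lemma cycle_of_step: "y \<in> cycle_of f x \<Longrightarrow> f y \<in> cycle_of f x"
  unfolding cycle_of_def by (auto intro: exI[of _ "Suc k" for k])

lemma apply_in_cycle_of [simp]: "f x \<in> cycle_of f x"
  using cycle_of_step[OF cycle_of_self] .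

lemma cycle_of_subset: "y \<in> cycle_of f x \<Longrightarrow> cycle_of f y \<subseteq> cycle_of f x"
  unfolding cycle_of_def by (auto, metis funpow_add comp_apply)

lemma cycle_of_least:
  assumes "\<And>y. y \<in> A \<Longrightarrow> f y \<in> A" and "x \<in> A"
  shows "cycle_of f x \<subseteq> A"
proof
  fix y assume "y \<in> cycle_of f x"
  then obtain k where "y = (f ^^ k) x" unfolding cycle_of_def by auto
  moreover have "(f ^^ k) x \<in> A" for k by (induct k) (auto simp: assms)
  ultimately show "y \<in> A" by simp
qed

lemma cycle_of_cong:
  assumes "\<And>y. y \<notin> B \<Longrightarrow> g y = f y" and "cycle_of f x \<inter> B = {}"
  shows "cycle_of g x = cycle_of f x"
proof -
  have "(g ^^ k) x = (f ^^ k) x" for k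
  proof (induct k)
    case (Suc k)
    have "(f ^^ k) x \<notin> B" using assms(2) funpow_in_cycle_of[where f=f and k=k and x=x] by blast
    then show ?case using Suc by (simp add: assms(1))
  qed simp
  then show ?thesis unfolding cycle_of_def by simp
qed

lemma funpow_add_apply: "(f ^^ (m + n)) x = (f ^^ n) ((f ^^ m) x)"
  by (induct n) auto

locale finite_perm =
  fixes f :: "'a \<Rightarrow> 'a" and S :: "'a set"
  assumes finite: "finite S" and bij: "bij_betw f S S"
begin

lemma apply_in: "x \<in> S \<Longrightarrow> f x \<in> S"
  using bij by (auto simp: bij_betw_def)

lemma funpow_in: "x \<in> S \<Longrightarrow> (f ^^ k) x \<in> S"
  by (induct k) (auto simp: apply_in)

lemma cycle_subset: "x \<in> S \<Longrightarrow> cycle_of f x \<subseteq> S"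
  by (rule cycle_of_least) (auto simp: apply_in)

lemma inj: "inj_on f S"
  using bij by (auto simp: bij_betw_def)

lemma inj_funpow: "inj_on (f ^^ k) S"
  using bij_betw_funpow[OF bij] by (auto simp: bij_betw_def)

lemma ex_period: assumes "x \<in> S" shows "\<exists>n>0. (f ^^ n) x = x"
proof -
  have "(\<lambda>k. (f ^^ k) x) ` {0..card S} \<subseteq> S" using funpow_in[OF assms] by auto
  then have "\<not> inj_on (\<lambda>k. (f ^^ k) x) {0..card S}"
    using card_inj_on_le[of _ "{0..card S}" S] finite by fastforce
  then obtain i j where ij: "i < j" "(f ^^ i) x = (f ^^ j) x"
    unfolding inj_on_def by (metis linorder_neqE_nat)
  then have "(f ^^ i) ((f ^^ (j - i)) x) = (f ^^ i) x"
    by (metis funpow_add comp_apply le_add_diff_inverse less_imp_le)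
  then have "(f ^^ (j - i)) x = x"
    using inj_funpow[of i] assms funpow_in[OF assms] unfolding inj_on_def by blast
  then show ?thesis using ij by (intro exI[of _ "j - i"]) auto
qed

lemma period_pos: "x \<in> S \<Longrightarrow> 0 < period f x"
  unfolding period_def by (metis (mono_tags, lifting) LeastI_ex ex_period)

lemma funpow_period: "x \<in> S \<Longrightarrow> (f ^^ period f x) x = x"
  unfolding period_def by (metis (mono_tags, lifting) LeastI_ex ex_period)

lemma funpow_less_period: "0 < m \<Longrightarrow> m < period f x \<Longrightarrow> (f ^^ m) x \<noteq> x"
  unfolding period_def using not_less_Least by blast

lemma funpow_mod_period: assumes "x \<in> S" shows "(f ^^ k) x = (f ^^ (k mod period f x)) x"
proof -
  have "(f ^^ (m * period f x)) x = x" for m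
    by (induct m) (auto simp: funpow_add[unfolded comp_def] funpow_period[OF assms])
  then have "(f ^^ (k mod period f x + (k div period f x) * period f x)) x = (f ^^ (k mod period f x)) x"
    by (simp add: funpow_add[unfolded comp_def])
  then show ?thesis by (metis mod_div_mult_eq)
qed

lemma cycle_of_eq_image_period: "x \<in> S \<Longrightarrow> cycle_of f x = (\<lambda>k. (f ^^ k) x) ` {..<period f x}"
proof
  assume x: "x \<in> S"
  show "cycle_of f x \<subseteq> (\<lambda>k. (f ^^ k) x) ` {..<period f x}"
  proof
    fix y assume "y \<in> cycle_of f x"
    then obtain k where "y = (f ^^ k) x" unfolding cycle_of_def by auto
    then have "y = (f ^^ (k mod period f x)) x" using funpow_mod_period[OF x] by simp
    then show "y \<in> (\<lambda>k. (f ^^ k) x) ` {..<period f x}" using period_pos[OF x] by simp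
  qed
qed auto

lemma inj_on_funpow_period: "x \<in> S \<Longrightarrow> inj_on (\<lambda>k. (f ^^ k) x) {..<period f x}"
  using inj_on_funpow_least[where f=f and n="period f x" and s=x] funpow_period funpow_less_period
  by (simp add: atLeast0LessThan)

lemma card_cycle_of: "x \<in> S \<Longrightarrow> card (cycle_of f x) = period f x"
  using cycle_of_eq_image_period inj_on_funpow_period card_image by fastforce

lemma finite_cycle_of: "x \<in> S \<Longrightarrow> finite (cycle_of f x)"
  using cycle_subset finite finite_subset by blast

lemma cycle_of_sym: assumes "x \<in> S" "y \<in> cycle_of f x" shows "x \<in> cycle_of f y"
proof -
  obtain k where k: "y = (f ^^ k) x" using assms unfolding cycle_of_def by auto
  let ?p = "period f x"
  have "(f ^^ (?p - k mod ?p)) y = (f ^^ (?p - k mod ?p + k mod ?p)) x"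
    using k funpow_mod_period[OF assms(1), of k] by (simp add: funpow_add[unfolded comp_def])
  also have "?p - k mod ?p + k mod ?p = ?p" using period_pos[OF assms(1)]
    by (simp add: order.strict_implies_order)
  finally have "(f ^^ (?p - k mod ?p)) y = x" using funpow_period[OF assms(1)] by simp
  then show ?thesis unfolding cycle_of_def by (metis (mono_tags, lifting) mem_Collect_eq)
qed

lemma cycle_of_eq: assumes "x \<in> S" "y \<in> cycle_of f x" shows "cycle_of f y = cycle_of f x"
  using cycle_of_subset[OF assms(2)] cycle_of_subset[OF cycle_of_sym[OF assms]] by blast

lemma cycle_of_apply: "x \<in> S \<Longrightarrow> cycle_of f (f x) = cycle_of f x"
  by (rule cycle_of_eq) auto

lemma cycle_of_preimage: assumes "x \<in> S" "y \<in> S" "f y \<in> cycle_of f x" shows "y \<in> cycle_of f x"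
  using cycle_of_eq[OF assms(1,3)] cycle_of_apply[OF assms(2)] cycle_of_self[of y f] by simp

lemma cycle_of_disjoint:
  "x \<in> S \<Longrightarrow> y \<in> S \<Longrightarrow> cycle_of f x = cycle_of f y \<or> cycle_of f x \<inter> cycle_of f y = {}"
  using cycle_of_eq by blast

lemma num_cycles_involution:
  assumes inv: "\<And>x. x \<in> S \<Longrightarrow> f (f x) = x \<and> f x \<noteq> x"
  shows "2 * num_cycles f S = card S"
proof -
  have cycle: "cycle_of f x = {x, f x}" if "x \<in> S" for x
  proof
    have "(f ^^ k) x \<in> {x, f x}" for k
      by (induct k) (auto simp: inv that)
    then show "cycle_of f x \<subseteq> {x, f x}" unfolding cycle_of_def by auto
  qed auto
  have "2 * card (cycle_of f ` S) = card (\<Union> (cycle_of f ` S))"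
  proof (rule card_partition)
    show "finite (\<Union> (cycle_of f ` S))" using finite finite_cycle_of by blast
    show "card c = 2" if "c \<in> cycle_of f ` S" for c
      using that cycle inv by fastforce
  qed (use finite cycle_of_disjoint in auto)
  moreover have "\<Union> (cycle_of f ` S) = S" using cycle_subset by auto
  ultimately show ?thesis unfolding num_cycles_def by simp
qed

end

lemma finite_perm_cycle_of:
  assumes n: "0 < n" and x: "(f ^^ n) x = x"
  shows "finite_perm f (cycle_of f x)"
proof -
  have mult: "(f ^^ (m * n)) x = x" for m
    by (induct m) (simp_all add: funpow_add_apply x)
  have "cycle_of f x \<subseteq> (\<lambda>k. (f ^^ k) x) ` {..<n}"
  proof
    fix y assume "y \<in> cycle_of f x"
    then obtain k where k: "y = (f ^^ k) x" unfolding cycle_of_def by blast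
    have "(f ^^ (k div n * n + k mod n)) x = (f ^^ (k mod n)) ((f ^^ (k div n * n)) x)"
      by (rule funpow_add_apply)
    then have "y = (f ^^ (k mod n)) x" unfolding div_mult_mod_eq mult k .
    moreover have "k mod n \<in> {..<n}" using n by simp
    ultimately show "y \<in> (\<lambda>k. (f ^^ k) x) ` {..<n}" by (rule image_eqI)
  qed
  then have finite: "finite (cycle_of f x)" by (rule finite_subset) simp
  have "cycle_of f x \<subseteq> f ` cycle_of f x"
  proof
    fix y assume "y \<in> cycle_of f x"
    then obtain k where k: "y = (f ^^ k) x" unfolding cycle_of_def by blast
    have "(f ^^ (n + k)) x = (f ^^ k) x" using funpow_add_apply[where f=f and m=n and n=k and x=x] x by simp
    moreover have "n + k = Suc (n + k - 1)" using n by simp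
    ultimately have "(f ^^ Suc (n + k - 1)) x = y" using k by metis
    then have "y = f ((f ^^ (n + k - 1)) x)" by simp
    then show "y \<in> f ` cycle_of f x" by (rule image_eqI[OF _ funpow_in_cycle_of])
  qed
  moreover have "f ` cycle_of f x \<subseteq> cycle_of f x" by (rule image_subsetI) (rule cycle_of_step)
  ultimately have image: "f ` cycle_of f x = cycle_of f x" by (rule equalityI[rotated])
  then have "inj_on f (cycle_of f x)" using finite by (simp add: eq_card_imp_inj_on)
  with image finite show ?thesis unfolding finite_perm_def bij_betw_def by blast
qed

lemma finite_perm_comp: "finite_perm f S \<Longrightarrow> bij_betw g S S \<Longrightarrow> finite_perm (f \<circ> g) S"
  unfolding finite_perm_def using bij_betw_trans by blast

section \<open>A genus inequality for pairs of permutations\<close>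

lemma num_cycles_split:
  assumes "finite S"
  shows "num_cycles f S = card {X \<in> cycle_of f ` S. a \<notin> X \<and> b \<notin> X}
                          + card {X \<in> cycle_of f ` S. a \<in> X \<or> b \<in> X}"
proof -
  let ?A = "{X \<in> cycle_of f ` S. a \<notin> X \<and> b \<notin> X}" and ?B = "{X \<in> cycle_of f ` S. a \<in> X \<or> b \<in> X}"
  have "num_cycles f S = card (?A \<union> ?B)"
    unfolding num_cycles_def by (rule arg_cong[where f=card]) blast
  also have "\<dots> = card ?A + card ?B" by (rule card_Un_disjoint) (use assms in auto)
  finally show ?thesis .
qed

lemma cycles_avoiding_cong:
  assumes "\<And>y. y \<notin> {a, b} \<Longrightarrow> g y = f y"
  shows "{X \<in> cycle_of g ` S. a \<notin> X \<and> b \<notin> X} = {X \<in> cycle_of f ` S. a \<notin> X \<and> b \<notin> X}"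
proof -
  have fg: "cycle_of g x = cycle_of f x" if "a \<notin> cycle_of f x" "b \<notin> cycle_of f x" for x
    by (rule cycle_of_cong[where B="{a, b}"]) (use assms that in auto)
  have gf: "cycle_of f x = cycle_of g x" if "a \<notin> cycle_of g x" "b \<notin> cycle_of g x" for x
    by (rule cycle_of_cong[where B="{a, b}"]) (use assms that in auto)
  show ?thesis
  proof (intro equalityI subsetI)
    fix X assume "X \<in> {X \<in> cycle_of g ` S. a \<notin> X \<and> b \<notin> X}"
    then obtain x where "x \<in> S" "X = cycle_of g x" "a \<notin> X" "b \<notin> X" by blast
    then show "X \<in> {X \<in> cycle_of f ` S. a \<notin> X \<and> b \<notin> X}" using gf[of x] by auto
  next
    fix X assume "X \<in> {X \<in> cycle_of f ` S. a \<notin> X \<and> b \<notin> X}"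
    then obtain x where "x \<in> S" "X = cycle_of f x" "a \<notin> X" "b \<notin> X" by blast
    then show "X \<in> {X \<in> cycle_of g ` S. a \<notin> X \<and> b \<notin> X}" using fg[of x] by auto
  qed
qed

context finite_perm
begin

lemma num_cycles_eq:
  assumes "a \<in> S" "b \<in> S"
  shows "num_cycles f S = card {X \<in> cycle_of f ` S. a \<notin> X \<and> b \<notin> X} + card {cycle_of f a, cycle_of f b}"
proof -
  have "{X \<in> cycle_of f ` S. a \<in> X \<or> b \<in> X} = {cycle_of f a, cycle_of f b}"
  proof (intro equalityI subsetI)
    fix X assume "X \<in> {X \<in> cycle_of f ` S. a \<in> X \<or> b \<in> X}"
    then obtain x where "x \<in> S" "X = cycle_of f x" "a \<in> X \<or> b \<in> X" by blast
    then show "X \<in> {cycle_of f a, cycle_of f b}" using cycle_of_eq by blast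
  qed (use assms in auto)
  then show ?thesis using num_cycles_split[OF finite, of f a b] by simp
qed

lemma transpose_joins_cycles:
  assumes a: "a \<in> S" and b: "b \<in> S" and nb: "b \<notin> cycle_of f a"
  shows "b \<in> cycle_of (f \<circ> transpose a b) a"
proof -
  define g where "g = f \<circ> transpose a b"
  have g: "g x = f (transpose a b x)" for x unfolding g_def by simp
  have na: "a \<notin> cycle_of f b" using cycle_of_sym[OF b, of a] nb by blast
  have "(g ^^ Suc m) a = (f ^^ Suc m) b" if "m < period f b" for m
    using that
  proof (induct m)
    case (Suc m)
    have "(f ^^ Suc m) b \<noteq> a" using na funpow_in_cycle_of[where f=f and k="Suc m" and x=b] by metis
    moreover have "(f ^^ Suc m) b \<noteq> b" using funpow_less_period[of "Suc m" b] Suc.prems by simp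
    ultimately show ?case using Suc by (simp add: g)
  qed (simp add: g)
  from this[of "period f b - 1"] have "(g ^^ period f b) a = b"
    using period_pos[OF b] funpow_period[OF b] by simp
  then show ?thesis unfolding g_def by (metis funpow_in_cycle_of)
qed

lemma num_cycles_comp_transpose_le:
  assumes "a \<in> S" "b \<in> S"
  shows "num_cycles (f \<circ> transpose a b) S \<le> num_cycles f S + 1"
proof -
  interpret g: finite_perm "f \<circ> transpose a b" S
    using finite_perm_comp[OF finite_perm_axioms] assms by simp
  have "card {cycle_of (f \<circ> transpose a b) a, cycle_of (f \<circ> transpose a b) b} \<le> 2"
    by (simp add: card_insert_le_m1)
  moreover have "1 \<le> card {cycle_of f a, cycle_of f b}"
    by (cases "cycle_of f a = cycle_of f b") auto
  moreover have "{X \<in> cycle_of (f \<circ> transpose a b) ` S. a \<notin> X \<and> b \<notin> X} = {X \<in> cycle_of f ` S. a \<notin> X \<and> b \<notin> X}"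
    by (rule cycles_avoiding_cong) simp
  ultimately show ?thesis using num_cycles_eq[OF assms] g.num_cycles_eq[OF assms] by simp
qed

lemma num_cycles_comp_transpose_merge:
  assumes "a \<in> S" "b \<in> S" "b \<notin> cycle_of f a"
  shows "num_cycles (f \<circ> transpose a b) S + 1 \<le> num_cycles f S"
proof -
  let ?g = "f \<circ> transpose a b"
  interpret g: finite_perm ?g S
    using finite_perm_comp[OF finite_perm_axioms] assms by simp
  have "cycle_of ?g b = cycle_of ?g a"
    using g.cycle_of_eq[OF assms(1) transpose_joins_cycles[OF assms]] .
  then have "card {cycle_of ?g a, cycle_of ?g b} = 1" by simp
  moreover have "cycle_of f a \<noteq> cycle_of f b" using assms(3) cycle_of_self[of b f] by metis
  then have "card {cycle_of f a, cycle_of f b} = 2" by simp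
  moreover have "{X \<in> cycle_of ?g ` S. a \<notin> X \<and> b \<notin> X} = {X \<in> cycle_of f ` S. a \<notin> X \<and> b \<notin> X}"
    by (rule cycles_avoiding_cong) simp
  ultimately show ?thesis using num_cycles_eq[OF assms(1,2)] g.num_cycles_eq[OF assms(1,2)] by simp
qed

end

definition component_rel :: "('a \<Rightarrow> 'a) \<Rightarrow> ('a \<Rightarrow> 'a) \<Rightarrow> 'a set \<Rightarrow> 'a rel" where
  "component_rel s t S =
     ({(x, s x) | x. x \<in> S} \<union> {(x, t x) | x. x \<in> S} \<union> {(s x, x) | x. x \<in> S} \<union> {(t x, x) | x. x \<in> S})\<^sup>*"

lemma component_rel_refl [simp]: "(x, x) \<in> component_rel s t S"
  unfolding component_rel_def by simp

lemma component_rel_sym: "(x, y) \<in> component_rel s t S \<Longrightarrow> (y, x) \<in> component_rel s t S"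
proof -
  have "sym ({(x, s x) | x. x \<in> S} \<union> {(x, t x) | x. x \<in> S} \<union> {(s x, x) | x. x \<in> S} \<union> {(t x, x) | x. x \<in> S})"
    unfolding sym_def by blast
  then have "sym (component_rel s t S)" unfolding component_rel_def by (rule sym_rtrancl)
  then show "(x, y) \<in> component_rel s t S \<Longrightarrow> (y, x) \<in> component_rel s t S"
    by (rule symD)
qed

lemma component_rel_trans:
  "(x, y) \<in> component_rel s t S \<Longrightarrow> (y, z) \<in> component_rel s t S \<Longrightarrow> (x, z) \<in> component_rel s t S"
  unfolding component_rel_def by simp

lemma component_rel_Image_eq:
  assumes "(x, y) \<in> component_rel s t S"
  shows "component_rel s t S `` {x} = component_rel s t S `` {y}"
proof (intro equalityI subsetI)
  fix z assume "z \<in> component_rel s t S `` {x}"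
  then show "z \<in> component_rel s t S `` {y}"
    using component_rel_trans[OF component_rel_sym[OF assms]] by simp
next
  fix z assume "z \<in> component_rel s t S `` {y}"
  then show "z \<in> component_rel s t S `` {x}" using component_rel_trans[OF assms] by simp
qed

lemma component_rel_first: "x \<in> S \<Longrightarrow> (x, s x) \<in> component_rel s t S"
  unfolding component_rel_def by (rule r_into_rtrancl) blast

lemma component_rel_second: "x \<in> S \<Longrightarrow> (x, t x) \<in> component_rel s t S"
  unfolding component_rel_def by (rule r_into_rtrancl) blast

lemma component_rel_funpow_comp:
  assumes t: "\<And>y. y \<in> S \<Longrightarrow> t y \<in> S" and s: "\<And>y. y \<in> S \<Longrightarrow> s y \<in> S" and "x \<in> S"
  shows "(x, ((s \<circ> t) ^^ k) x) \<in> component_rel s t S \<and> ((s \<circ> t) ^^ k) x \<in> S"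
proof (induct k)
  case (Suc k)
  let ?y = "((s \<circ> t) ^^ k) x"
  have y: "(x, ?y) \<in> component_rel s t S" "?y \<in> S" using Suc by blast+
  have "(x, t ?y) \<in> component_rel s t S"
    using component_rel_trans[OF y(1) component_rel_second[OF y(2)]] .
  then have "(x, s (t ?y)) \<in> component_rel s t S"
    using component_rel_trans[OF _ component_rel_first[OF t[OF y(2)]]] by blast
  moreover have "((s \<circ> t) ^^ Suc k) x = s (t ?y)" by (simp only: funpow.simps(2) comp_apply)
  ultimately show ?case using s[OF t[OF y(2)]] by (simp only:)
qed (simp add: assms(3))

lemma quotient_eq_image: "S // r = (\<lambda>x. r `` {x}) ` S"
  unfolding quotient_def by auto

lemma card_quotient_mono:
  assumes "finite S" and "R \<subseteq> T" and "\<And>x. (x, x) \<in> R" and "trans T"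
  shows "card (S // T) \<le> card (S // R)"
proof -
  have "T `` (R `` {x}) = T `` {x}" for x
    using assms(2-4) unfolding trans_def by blast
  then have "S // T = (\<lambda>X. T `` X) ` (S // R)"
    unfolding quotient_eq_image image_image by simp
  then show ?thesis using assms(1) by (simp add: card_image_le quotient_eq_image)
qed

definition merge_rel :: "'a rel \<Rightarrow> 'a \<Rightarrow> 'a \<Rightarrow> 'a rel" where
  "merge_rel R a b = R \<union> {(x, y). ((x, a) \<in> R \<and> (b, y) \<in> R) \<or> ((x, b) \<in> R \<and> (a, y) \<in> R)}"

lemma trans_merge_rel: "sym R \<Longrightarrow> trans R \<Longrightarrow> trans (merge_rel R a b)"
  unfolding merge_rel_def trans_def sym_def by blast

lemma card_quotient_merge_rel:
  assumes fin: "finite S" and a: "a \<in> S"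
    and refl: "\<And>x. (x, x) \<in> R" and sym: "\<And>x y. (x, y) \<in> R \<Longrightarrow> (y, x) \<in> R"
    and trans: "\<And>x y z. (x, y) \<in> R \<Longrightarrow> (y, z) \<in> R \<Longrightarrow> (x, z) \<in> R"
  shows "card (S // R) \<le> card (S // merge_rel R a b) + 1"
proof -
  define T where "T = merge_rel R a b"
  define K where "K = {X \<in> S // R. a \<notin> X \<and> b \<notin> X}"
  have finR: "finite (S // R)" and finT: "finite (S // T)" unfolding quotient_eq_image using fin by auto
  have KT: "K \<subseteq> S // T"
  proof
    fix X assume "X \<in> K"
    then obtain x where x: "x \<in> S" "X = R `` {x}" "a \<notin> X" "b \<notin> X" unfolding K_def quotient_eq_image by auto
    then have "T `` {x} = R `` {x}" unfolding T_def merge_rel_def by auto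
    then show "X \<in> S // T" unfolding quotient_eq_image using x by auto
  qed
  have "T `` {a} \<in> S // T" unfolding quotient_eq_image using a by auto
  moreover have "T `` {a} \<notin> K" unfolding K_def T_def merge_rel_def using refl by blast
  ultimately have "card (insert (T `` {a}) K) \<le> card (S // T)" using KT card_mono[OF finT] by blast
  then have c1: "card K + 1 \<le> card (S // T)"
    using finite_subset[OF KT finT] \<open>T `` {a} \<notin> K\<close> by simp
  have "S // R \<subseteq> K \<union> {R `` {a}, R `` {b}}"
  proof
    fix X assume X: "X \<in> S // R"
    then obtain x where x: "x \<in> S" "X = R `` {x}" unfolding quotient_eq_image by auto
    have eq: "R `` {x} = R `` {y}" if "(x, y) \<in> R" for y
      using that sym trans by blast
    show "X \<in> K \<union> {R `` {a}, R `` {b}}"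
    proof (cases "a \<in> X \<or> b \<in> X")
      case True
      then have "X = R `` {a} \<or> X = R `` {b}" using eq x by blast
      then show ?thesis by auto
    next
      case False then show ?thesis using X unfolding K_def by auto
    qed
  qed
  then have "card (S // R) \<le> card (K \<union> {R `` {a}, R `` {b}})"
    using finR finite_subset[OF KT finT] by (intro card_mono) auto
  also have "\<dots> \<le> card K + card {R `` {a}, R `` {b}}" by (rule card_Un_le)
  also have "card {R `` {a}, R `` {b}} \<le> 2" by (simp add: card_insert_le_m1)
  finally show ?thesis using c1 unfolding T_def by linarith
qed

lemma sym_merge_rel:
  assumes "sym R"
  shows "sym (merge_rel R a b)"
proof (rule symI)
  fix x y assume "(x, y) \<in> merge_rel R a b"
  then show "(y, x) \<in> merge_rel R a b" using symD[OF assms] unfolding merge_rel_def by blast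
qed

lemma component_rel_comp_transpose:
  assumes "a \<in> S" "b \<in> S"
  shows "component_rel s (t \<circ> transpose a b) S \<subseteq> merge_rel (component_rel s t S) a b"
proof (rule subrelI)
  let ?R = "component_rel s t S" and ?t = "t \<circ> transpose a b"
  define T where "T = merge_rel ?R a b"
  have symR: "sym ?R" by (intro symI) (fact component_rel_sym)
  have transR: "trans ?R" by (intro transI) (fact component_rel_trans)
  have symT: "sym T" unfolding T_def using sym_merge_rel[OF symR] .
  have transT: "trans T" unfolding T_def using trans_merge_rel[OF symR transR] .
  have RT: "?R \<subseteq> T" unfolding T_def merge_rel_def by (rule Un_upper1)
  have t: "(w, ?t w) \<in> T" if "w \<in> S" for w
  proof -
    consider "w = a" | "w = b" | "w \<noteq> a" "w \<noteq> b" by blast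
    then show ?thesis
    proof cases
      case 1
      have "(b, t b) \<in> ?R" by (rule component_rel_second) fact
      then show ?thesis unfolding T_def merge_rel_def using 1 by simp
    next
      case 2
      have "(a, t a) \<in> ?R" by (rule component_rel_second) fact
      then show ?thesis unfolding T_def merge_rel_def using 2 by simp
    next
      case 3
      then show ?thesis using subsetD[OF RT component_rel_second[OF that, of t s]] by simp
    qed
  qed
  have s: "(w, s w) \<in> T" if "w \<in> S" for w
    using subsetD[OF RT component_rel_first[OF that]] .
  fix x y assume "(x, y) \<in> component_rel s ?t S"
  then show "(x, y) \<in> T"
    unfolding component_rel_def
  proof (induct rule: rtrancl_induct)
    case base
    show ?case using subsetD[OF RT component_rel_refl] .
  next
    case (step y z)
    from step(2) have "(y, z) \<in> T"
    proof (elim UnE CollectE exE conjE)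
      fix w assume "(y, z) = (w, s w)" "w \<in> S" then show ?thesis using s by simp
    next
      fix w assume "(y, z) = (w, ?t w)" "w \<in> S" then show ?thesis using t by simp
    next
      fix w assume "(y, z) = (s w, w)" "w \<in> S" then show ?thesis using s symT by (simp add: symD)
    next
      fix w assume "(y, z) = (?t w, w)" "w \<in> S" then show ?thesis using t symT by (simp add: symD)
    qed
    with step(3) show ?case by (rule transD[OF transT])
  qed
qed

lemma merge_rel_absorb: "(a, b) \<in> R \<Longrightarrow> sym R \<Longrightarrow> trans R \<Longrightarrow> merge_rel R a b = R"
  unfolding merge_rel_def by (auto dest: symD transD)

lemma (in finite_perm) component_rel_Image_fixed:
  assumes fixed: "\<forall>x\<in>S. t x = x" and x: "x \<in> S"
  shows "component_rel f t S `` {x} = cycle_of f x"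
proof (intro equalityI subsetI)
  fix y assume "y \<in> component_rel f t S `` {x}"
  then have "(x, y) \<in> component_rel f t S" by simp
  then show "y \<in> cycle_of f x"
    unfolding component_rel_def
  proof (induct rule: rtrancl_induct)
    case (step y z)
    from step(2) show ?case
    proof (elim UnE CollectE exE conjE)
      fix w assume "(y, z) = (w, f w)" then show ?thesis using step(3) cycle_of_step by auto
    next
      fix w assume "(y, z) = (w, t w)" "w \<in> S" then show ?thesis using step(3) fixed by auto
    next
      fix w assume "(y, z) = (f w, w)" "w \<in> S"
      then show ?thesis using step(3) cycle_of_preimage[OF x] by auto
    next
      fix w assume "(y, z) = (t w, w)" "w \<in> S" then show ?thesis using step(3) fixed by auto
    qed
  qed simp
next
  fix y assume "y \<in> cycle_of f x"
  then obtain k where "y = (f ^^ k) x" unfolding cycle_of_def by auto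
  moreover have "(x, (f ^^ k) x) \<in> component_rel f t S" for k
  proof (induct k)
    case (Suc k)
    then show ?case using component_rel_trans component_rel_first funpow_in[OF x, of k] by fastforce
  qed simp
  ultimately show "y \<in> component_rel f t S `` {x}" by simp
qed

lemma genus_inequality_fixed:
  assumes s: "finite_perm s S" and fixed: "\<forall>x\<in>S. t x = x"
  shows "num_cycles s S + num_cycles t S + num_cycles (s \<circ> t) S \<le> card S + 2 * card (S // component_rel s t S)"
proof -
  interpret s: finite_perm s S by (rule s)
  have "cycle_of t x = {x}" if "x \<in> S" for x
  proof -
    have "(t ^^ k) x = x" for k by (induct k) (auto simp: fixed that)
    then show ?thesis unfolding cycle_of_def by auto
  qed
  then have "cycle_of t ` S = (\<lambda>x. {x}) ` S" by simp
  then have "num_cycles t S = card S" unfolding num_cycles_def by (simp add: card_image)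
  moreover have "cycle_of (s \<circ> t) x = cycle_of s x" if "x \<in> S" for x
    by (rule cycle_of_cong[where B="- S"]) (use fixed s.cycle_subset[OF that] in auto)
  then have "num_cycles (s \<circ> t) S = num_cycles s S" unfolding num_cycles_def by simp
  moreover have "S // component_rel s t S = cycle_of s ` S"
    unfolding quotient_eq_image using s.component_rel_Image_fixed[OF fixed] by simp
  ultimately show ?thesis unfolding num_cycles_def by simp
qed

lemma genus_inequality_step:
  assumes fin: "finite S" and s: "bij_betw s S S" and t: "bij_betw t S S"
    and a: "a \<in> S" and b: "b \<in> S" "b \<noteq> a" "t b = b"
    and IH: "num_cycles s S + num_cycles t S + num_cycles (s \<circ> t) S
              \<le> card S + 2 * card (S // component_rel s t S)"
  shows "num_cycles s S + num_cycles (t \<circ> transpose a b) S + num_cycles (s \<circ> (t \<circ> transpose a b)) S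
         \<le> card S + 2 * card (S // component_rel s (t \<circ> transpose a b) S)"
proof -
  interpret t: finite_perm t S using fin t by unfold_locales
  interpret st: finite_perm "s \<circ> t" S using fin bij_betw_trans[OF t s] by unfold_locales
  let ?R = "component_rel s t S" and ?t = "t \<circ> transpose a b"
  have symR: "sym ?R" by (intro symI) (fact component_rel_sym)
  have transR: "trans ?R" by (intro transI) (fact component_rel_trans)
  have "(t ^^ k) b = b" for k by (induct k) (simp_all add: b(3))
  then have "a \<notin> cycle_of t b" using b(2) unfolding cycle_of_def by auto
  then have "b \<notin> cycle_of t a" using t.cycle_of_sym[OF a] by blast
  then have ct: "num_cycles ?t S + 1 \<le> num_cycles t S"
    by (rule t.num_cycles_comp_transpose_merge[OF a b(1)])
  have comp: "s \<circ> ?t = (s \<circ> t) \<circ> transpose a b" by (rule comp_assoc[symmetric])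
  have c1: "card (S // merge_rel ?R a b) \<le> card (S // component_rel s ?t S)"
    by (rule card_quotient_mono[OF fin component_rel_comp_transpose[OF a b(1)]])
      (simp_all add: trans_merge_rel[OF symR transR])
  have c2: "card (S // ?R) \<le> card (S // merge_rel ?R a b) + 1"
    by (rule card_quotient_merge_rel[OF fin a component_rel_refl component_rel_sym component_rel_trans])
  show ?thesis
  proof (cases "(a, b) \<in> ?R")
    case True
    have "merge_rel ?R a b = ?R" by (rule merge_rel_absorb[OF True symR transR])
    with c1 have "card (S // ?R) \<le> card (S // component_rel s ?t S)" by simp
    moreover have "num_cycles (s \<circ> ?t) S \<le> num_cycles (s \<circ> t) S + 1"
      unfolding comp by (rule st.num_cycles_comp_transpose_le[OF a b(1)])
    ultimately show ?thesis using IH ct by linarith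
  next
    case False
    have "b \<notin> cycle_of (s \<circ> t) a"
    proof
      assume "b \<in> cycle_of (s \<circ> t) a"
      then obtain k where k: "b = ((s \<circ> t) ^^ k) a" unfolding cycle_of_def by blast
      have "\<And>y. y \<in> S \<Longrightarrow> s y \<in> S" using s by (simp add: bij_betwE)
      from conjunct1[OF component_rel_funpow_comp[OF t.apply_in this a]] have "(a, b) \<in> ?R"
        unfolding k .
      with False show False ..
    qed
    then have "num_cycles (s \<circ> ?t) S + 1 \<le> num_cycles (s \<circ> t) S"
      unfolding comp by (rule st.num_cycles_comp_transpose_merge[OF a b(1)])
    then show ?thesis using IH ct c1 c2 by linarith
  qed
qed

theorem genus_inequality:
  assumes fin: "finite S" and s: "bij_betw s S S" and "bij_betw t S S"
  shows "num_cycles s S + num_cycles t S + num_cycles (s \<circ> t) S \<le> card S + 2 * card (S // component_rel s t S)"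
  using assms(3)
proof (induct "card {x \<in> S. t x \<noteq> x}" arbitrary: t rule: less_induct)
  case less
  interpret t: finite_perm t S using fin less.prems by unfold_locales
  show ?case
  proof (cases "\<forall>x\<in>S. t x = x")
    case True
    then show ?thesis using genus_inequality_fixed fin s unfolding finite_perm_def by blast
  next
    case False
    then obtain a where a: "a \<in> S" "t a \<noteq> a" by auto
    define b where "b = t a"
    define t0 where "t0 = t \<circ> transpose a b"
    have b: "b \<in> S" "b \<noteq> a" using a t.apply_in b_def by auto
    have "bij_betw (transpose a b) S S" using a b by simp
    then have bt0: "bij_betw t0 S S" unfolding t0_def using bij_betw_trans less.prems by blast
    have t0b: "t0 b = b" unfolding t0_def b_def by simp
    have tt0: "t = t0 \<circ> transpose a b" unfolding t0_def by (simp add: comp_assoc)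
    have "{x \<in> S. t0 x \<noteq> x} \<subseteq> {x \<in> S. t x \<noteq> x} - {b}"
    proof
      fix x assume x: "x \<in> {x \<in> S. t0 x \<noteq> x}"
      then have "x \<noteq> b" using t0b by auto
      moreover have "t x \<noteq> x"
      proof (cases "x = a")
        case False
        then have "t0 x = t x" using \<open>x \<noteq> b\<close> unfolding t0_def by simp
        then show ?thesis using x by simp
      qed (use a in simp)
      ultimately show "x \<in> {x \<in> S. t x \<noteq> x} - {b}" using x by simp
    qed
    moreover have "t b \<noteq> b" using t.inj a b b_def unfolding inj_on_def by metis
    ultimately have "{x \<in> S. t0 x \<noteq> x} \<subset> {x \<in> S. t x \<noteq> x}" using b by blast
    then have "card {x \<in> S. t0 x \<noteq> x} < card {x \<in> S. t x \<noteq> x}"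
      using fin by (intro psubset_card_mono) auto
    from genus_inequality_step[OF fin s bt0 a(1) b t0b less.hyps[OF this bt0]]
    show ?thesis unfolding tt0[symmetric] .
  qed
qed

lemma tail_eq_cycle_of: "tail nxt = cycle_of nxt"
  by (auto simp: tail_def cycle_of_def fun_eq_iff)

lemma face_eq_cycle_of: "face opp nxt = cycle_of (phi opp nxt)"
  by (auto simp: face_def cycle_of_def fun_eq_iff)

lemma head_eq_tail_opp: "head opp nxt h = tail nxt (opp h)"
  by (simp add: head_def)

locale plane_map_setting =
  fixes H :: "'a set" and opp nxt :: "'a \<Rightarrow> 'a"
  assumes pm: "plane_map H opp nxt"
begin

lemma finite_H: "finite H" using pm unfolding plane_map_def by blast
lemma opp_in: "h \<in> H \<Longrightarrow> opp h \<in> H" using pm unfolding plane_map_def by blast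
lemma opp_ne: "h \<in> H \<Longrightarrow> opp h \<noteq> h" using pm unfolding plane_map_def by blast
lemma opp_opp[simp]: "h \<in> H \<Longrightarrow> opp (opp h) = h" using pm unfolding plane_map_def by blast
lemma bij_nxt: "bij_betw nxt H H" using pm unfolding plane_map_def by blast
lemma connected: "h \<in> H \<Longrightarrow> h' \<in> H \<Longrightarrow>
   (h, h') \<in> ({(x, opp x) | x. x \<in> H} \<union> {(x, nxt x) | x. x \<in> H})\<^sup>*"
  using pm unfolding plane_map_def by blast
lemma euler: "int (card (vertices H nxt)) - int (card (edges H opp)) + int (card (faces H opp nxt)) = 2"
  using pm unfolding plane_map_def by blast

lemma bij_opp: "bij_betw opp H H"
proof (rule bij_betw_byWitness[where f'=opp])
  show "\<forall>a\<in>H. opp (opp a) = a" by simp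
  show "\<forall>a'\<in>H. opp (opp a') = a'" by simp
  show "opp ` H \<subseteq> H" using opp_in by blast
  show "opp ` H \<subseteq> H" using opp_in by blast
qed

lemma bij_phi: "bij_betw (phi opp nxt) H H"
  unfolding phi_def using bij_betw_trans[OF bij_opp bij_nxt] .

lemma nxt_in: "h \<in> H \<Longrightarrow> nxt h \<in> H"
  using bij_nxt by (auto simp: bij_betw_def)

sublocale nxt_perm: finite_perm nxt H using finite_H bij_nxt by unfold_locales
sublocale phi_perm: finite_perm "phi opp nxt" H using finite_H bij_phi by unfold_locales
sublocale opp_perm: finite_perm opp H using finite_H bij_opp by unfold_locales

lemma phi_apply: "phi opp nxt h = nxt (opp h)" unfolding phi_def by simp

lemma phi_in: "h \<in> H \<Longrightarrow> phi opp nxt h \<in> H" by (simp add: phi_apply nxt_in opp_in)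

lemma face_nxt: "h \<in> H \<Longrightarrow> face opp nxt (nxt h) = face opp nxt (opp h)"
proof -
  assume h: "h \<in> H"
  have "nxt h = phi opp nxt (opp h)" using h by (simp add: phi_apply)
  then show ?thesis unfolding face_eq_cycle_of using phi_perm.cycle_of_apply[OF opp_in[OF h]] by simp
qed

lemma tail_nxt: "h \<in> H \<Longrightarrow> tail nxt (nxt h) = tail nxt h"
  unfolding tail_eq_cycle_of by (rule nxt_perm.cycle_of_apply)

lemma tail_eqI: "h \<in> H \<Longrightarrow> g \<in> tail nxt h \<Longrightarrow> tail nxt g = tail nxt h"
  unfolding tail_eq_cycle_of by (rule nxt_perm.cycle_of_eq)

lemma tail_mem: "tail nxt g = tail nxt h \<Longrightarrow> g \<in> tail nxt h"
  unfolding tail_eq_cycle_of using cycle_of_self[of g nxt] by simp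

lemma tail_subset: "h \<in> H \<Longrightarrow> tail nxt h \<subseteq> H"
  unfolding tail_eq_cycle_of using nxt_perm.cycle_subset .

lemma face_subset: "h \<in> H \<Longrightarrow> face opp nxt h \<subseteq> H"
  unfolding face_eq_cycle_of using phi_perm.cycle_subset .

lemma face_eqI: "h \<in> H \<Longrightarrow> g \<in> face opp nxt h \<Longrightarrow> face opp nxt g = face opp nxt h"
  unfolding face_eq_cycle_of by (rule phi_perm.cycle_of_eq)

lemma face_self: "h \<in> face opp nxt h"
  unfolding face_eq_cycle_of by simp

lemma edges_eq_cycles: "edges H opp = cycle_of opp ` H"
proof -
  have "cycle_of opp h = {h, opp h}" if "h \<in> H" for h
  proof
    have "(opp ^^ k) h \<in> {h, opp h}" for k
      by (induct k) (auto simp: that)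
    then show "cycle_of opp h \<subseteq> {h, opp h}" unfolding cycle_of_def by auto
  qed auto
  then show ?thesis unfolding edges_def by (intro image_cong) simp_all
qed

lemma card_darts_twice_edges: "2 * card (edges H opp) = card H"
proof -
  have "\<And>x. x \<in> H \<Longrightarrow> opp (opp x) = x \<and> opp x \<noteq> x" using opp_ne by simp
  from opp_perm.num_cycles_involution[OF this] show ?thesis unfolding edges_eq_cycles num_cycles_def .
qed

lemma card_vertices_num_cycles: "card (vertices H nxt) = num_cycles nxt H"
  unfolding vertices_def num_cycles_def tail_eq_cycle_of ..

lemma card_faces_num_cycles: "card (faces H opp nxt) = num_cycles (phi opp nxt) H"
  unfolding faces_def num_cycles_def face_eq_cycle_of ..

lemma finite_vertices: "finite (vertices H nxt)"
  unfolding vertices_def using finite_H by simp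

lemma finite_faces: "finite (faces H opp nxt)"
  unfolding faces_def using finite_H by simp

definition deg :: "'a \<Rightarrow> nat" where "deg h = card (tail nxt h)"

lemma deg_eq_period: "h \<in> H \<Longrightarrow> deg h = period nxt h"
  unfolding deg_def tail_eq_cycle_of using nxt_perm.card_cycle_of .

lemma deg_pos: "h \<in> H \<Longrightarrow> 0 < deg h"
  using deg_eq_period nxt_perm.period_pos by metis

lemma funpow_deg: "h \<in> H \<Longrightarrow> (nxt ^^ deg h) h = h"
  using deg_eq_period nxt_perm.funpow_period by metis

lemma funpow_nxt_mod_deg: "h \<in> H \<Longrightarrow> (nxt ^^ m) h = (nxt ^^ (m mod deg h)) h"
proof -
  assume h: "h \<in> H"
  show ?thesis unfolding deg_eq_period[OF h] by (rule nxt_perm.funpow_mod_period[OF h])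
qed

lemma funpow_nxt_inj: "h \<in> H \<Longrightarrow> i < deg h \<Longrightarrow> j < deg h \<Longrightarrow> (nxt ^^ i) h = (nxt ^^ j) h \<Longrightarrow> i = j"
proof -
  assume h: "h \<in> H" and ij: "i < deg h" "j < deg h" "(nxt ^^ i) h = (nxt ^^ j) h"
  have "inj_on (\<lambda>k. (nxt ^^ k) h) {..<deg h}" using nxt_perm.inj_on_funpow_period[OF h] deg_eq_period[OF h] by simp
  then show "i = j" using ij unfolding inj_on_def by blast
qed

lemma ex_funpow_in_tail: "h \<in> H \<Longrightarrow> g \<in> tail nxt h \<Longrightarrow> \<exists>k < deg h. (nxt ^^ k) h = g"
proof -
  assume h: "h \<in> H" and g: "g \<in> tail nxt h"
  have "g \<in> (\<lambda>k. (nxt ^^ k) h) ` {..<deg h}" using g nxt_perm.cycle_of_eq_image_period[OF h] deg_eq_period[OF h] unfolding tail_eq_cycle_of by simp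
  then show ?thesis by blast
qed

lemma
  assumes h: "h \<in> H" and g: "g \<in> tail nxt h"
  shows cw_dist_lt_deg: "cw_dist nxt h g < deg h"
    and funpow_cw_dist: "(nxt ^^ cw_dist nxt h g) h = g"
proof -
  obtain k where k: "k < deg h" "(nxt ^^ k) h = g" using ex_funpow_in_tail[OF h g] by blast
  show "(nxt ^^ cw_dist nxt h g) h = g" unfolding cw_dist_def by (rule LeastI[of _ k]) (rule k(2))
  have "cw_dist nxt h g \<le> k" unfolding cw_dist_def by (rule Least_le) (rule k(2))
  then show "cw_dist nxt h g < deg h" using k by simp
qed

lemma funpow_eq_iff_cw_dist:
  assumes h: "h \<in> H" and g: "g \<in> tail nxt h"
  shows "(nxt ^^ m) h = g \<longleftrightarrow> m mod deg h = cw_dist nxt h g"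
proof
  assume "(nxt ^^ m) h = g"
  then have "(nxt ^^ (m mod deg h)) h = (nxt ^^ cw_dist nxt h g) h"
    using cw_dist_lt_deg[OF h g] funpow_cw_dist[OF h g] funpow_nxt_mod_deg[OF h] by simp
  then show "m mod deg h = cw_dist nxt h g"
    using funpow_nxt_inj[OF h] cw_dist_lt_deg[OF h g] funpow_cw_dist[OF h g] deg_pos[OF h] by simp
next
  assume "m mod deg h = cw_dist nxt h g"
  then have "(nxt ^^ m) h = (nxt ^^ cw_dist nxt h g) h" using funpow_nxt_mod_deg[OF h, of m] by simp
  then show "(nxt ^^ m) h = g" using funpow_cw_dist[OF h g] by simp
qed

lemma funpow_sum_cw_dist:
  assumes h: "h \<in> H" and b: "\<And>k. k \<le> n \<Longrightarrow> b k \<in> tail nxt h"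
  shows "(nxt ^^ (\<Sum>k<n. cw_dist nxt (b k) (b (Suc k)))) (b 0) = b n"
  using b
proof (induct n)
  case (Suc n)
  have bn: "b n \<in> tail nxt h" and bs: "b (Suc n) \<in> tail nxt h" using Suc.prems by simp_all
  have "b n \<in> H" using tail_subset[OF h] bn by blast
  moreover have "tail nxt (b (Suc n)) = tail nxt (b n)" using tail_eqI[OF h bn] tail_eqI[OF h bs] by simp
  then have "b (Suc n) \<in> tail nxt (b n)" by (rule tail_mem)
  ultimately have "(nxt ^^ cw_dist nxt (b n) (b (Suc n))) (b n) = b (Suc n)" by (rule funpow_cw_dist)
  moreover have "(nxt ^^ (\<Sum>k<n. cw_dist nxt (b k) (b (Suc k)))) (b 0) = b n"
    by (rule Suc.hyps) (rule Suc.prems, simp)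
  ultimately show ?case by (simp only: sum.lessThan_Suc funpow_add_apply)
qed simp

lemma cw_dist_self: "cw_dist nxt h h = 0"
  unfolding cw_dist_def by simp

lemma cw_dist_eq_0: "h \<in> H \<Longrightarrow> g \<in> tail nxt h \<Longrightarrow> cw_dist nxt h g = 0 \<Longrightarrow> g = h"
proof -
  assume h: "h \<in> H" and g: "g \<in> tail nxt h" and z: "cw_dist nxt h g = 0"
  show "g = h" using funpow_cw_dist[OF h g] z by simp
qed

lemma funpow_in_tail: "(nxt ^^ m) h \<in> tail nxt h"
  unfolding tail_eq_cycle_of by simp

lemma deg_eq_in_tail: "h \<in> H \<Longrightarrow> g \<in> tail nxt h \<Longrightarrow> deg g = deg h"
  unfolding deg_def using tail_eqI by simp

end

locale simple_cycle = plane_map_setting H opp nxt for H :: "'a set" and opp nxt +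
  fixes C :: "'a set" and cnext :: "'a \<Rightarrow> 'a" and c0 :: 'a
  assumes C_subset: "C \<subseteq> H"
    and cnext_in: "c \<in> C \<Longrightarrow> cnext c \<in> C"
    and tail_cnext: "c \<in> C \<Longrightarrow> tail nxt (cnext c) = tail nxt (opp c)"
    and inj_on_tail: "inj_on (tail nxt) C"
    and inj_on_cnext: "inj_on cnext C"
    and c0_in: "c0 \<in> C" and C_cycle: "C \<subseteq> cycle_of cnext c0"
    and C_disjoint_opp: "C \<inter> opp ` C = {}"
begin

definition Crev :: "'a set" where "Crev = opp ` C"
definition Cedge :: "'a set" where "Cedge = C \<union> Crev"

lemma finite_C: "finite C" by (rule finite_subset[OF C_subset finite_H])

lemma bij_cnext: "bij_betw cnext C C"
proof -
  have "cnext ` C \<subseteq> C" using cnext_in by blast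
  then have "cnext ` C = C" using endo_inj_surj[OF finite_C _ inj_on_cnext] by blast
  then show ?thesis using inj_on_cnext unfolding bij_betw_def by blast
qed

sublocale cnext_perm: finite_perm cnext C using finite_C bij_cnext by unfold_locales

definition cprev :: "'a \<Rightarrow> 'a" where "cprev c = inv_into C cnext c"

lemma cprev_in: "c \<in> C \<Longrightarrow> cprev c \<in> C"
  unfolding cprev_def using bij_cnext by (metis bij_betw_def inv_into_into)

lemma cnext_cprev: "c \<in> C \<Longrightarrow> cnext (cprev c) = c"
  unfolding cprev_def using bij_cnext by (metis bij_betw_def f_inv_into_f)

lemma cprev_cnext: "c \<in> C \<Longrightarrow> cprev (cnext c) = c"
  unfolding cprev_def using inj_on_cnext by (simp add: inv_into_f_f)

definition cin :: "'a \<Rightarrow> 'a" where "cin c = opp (cprev c)"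

lemma C_H: "c \<in> C \<Longrightarrow> c \<in> H" using C_subset by blast

lemma Crev_H: "x \<in> Crev \<Longrightarrow> x \<in> H" unfolding Crev_def using C_subset opp_in by blast

lemma Cedge_H: "e \<in> Cedge \<Longrightarrow> e \<in> H" unfolding Cedge_def using C_H Crev_H by blast

lemma cin_Crev: "c \<in> C \<Longrightarrow> cin c \<in> Crev" unfolding cin_def Crev_def using cprev_in by blast

lemma tail_cin: "c \<in> C \<Longrightarrow> tail nxt (cin c) = tail nxt c"
  unfolding cin_def using tail_cnext[OF cprev_in] cnext_cprev by metis

lemma C_notin_Crev: "c \<in> C \<Longrightarrow> c \<notin> Crev" unfolding Crev_def using C_disjoint_opp by blast

lemma cin_neq: "c \<in> C \<Longrightarrow> cin c \<noteq> c" using cin_Crev C_notin_Crev by metis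

lemma opp_C: "c \<in> C \<Longrightarrow> opp c \<in> Crev" unfolding Crev_def by blast

lemma opp_Crev: "x \<in> Crev \<Longrightarrow> opp x \<in> C" unfolding Crev_def using C_H opp_opp by auto

lemma opp_Cedge: "e \<in> Cedge \<Longrightarrow> opp e \<in> Cedge" unfolding Cedge_def using opp_C opp_Crev by blast

lemma cin_cnext: "c \<in> C \<Longrightarrow> cin (cnext c) = opp c" unfolding cin_def using cprev_cnext by simp

lemma Crev_cin: "x \<in> Crev \<Longrightarrow> \<exists>c\<in>C. x = cin c"
proof -
  assume "x \<in> Crev"
  then obtain c' where c': "c' \<in> C" "x = opp c'" unfolding Crev_def by blast
  then show ?thesis using cin_cnext[OF c'(1)] cnext_in[OF c'(1)] by metis
qed

lemma Cedge_at_tail: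
  assumes e: "e \<in> Cedge" and c: "c \<in> C" and t: "tail nxt e = tail nxt c"
  shows "e = c \<or> e = cin c"
proof (cases "e \<in> C")
  case True then show ?thesis using inj_on_tail t c unfolding inj_on_def by blast
next
  case False
  then have "e \<in> Crev" using e unfolding Cedge_def by blast
  then obtain c' where c': "c' \<in> C" "e = cin c'" using Crev_cin by blast
  then have "tail nxt c' = tail nxt c" using tail_cin t by metis
  then have "c' = c" using inj_on_tail c c' unfolding inj_on_def by blast
  then show ?thesis using c' by blast
qed

definition partner :: "'a \<Rightarrow> 'a" where
  "partner h = (if h \<in> C then cin h else cnext (opp h))"

lemma partner_C: "c \<in> C \<Longrightarrow> partner c = cin c" unfolding partner_def by simp

lemma partner_Crev: "x \<in> Crev \<Longrightarrow> partner x = cnext (opp x)"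
  unfolding partner_def using C_notin_Crev by auto

lemma partner_in: "e \<in> Cedge \<Longrightarrow> partner e \<in> Cedge"
  unfolding Cedge_def using partner_C partner_Crev cin_Crev cnext_in opp_Crev by auto

lemma partner_tail: "e \<in> Cedge \<Longrightarrow> tail nxt (partner e) = tail nxt e"
proof -
  assume e: "e \<in> Cedge"
  show ?thesis
  proof (cases "e \<in> C")
    case True then show ?thesis using partner_C tail_cin by simp
  next
    case False
    then have x: "e \<in> Crev" using e unfolding Cedge_def by blast
    then have "opp e \<in> C" using opp_Crev by blast
    then show ?thesis using partner_Crev[OF x] tail_cnext Crev_H[OF x] by simp
  qed
qed

lemma partner_partner: "e \<in> Cedge \<Longrightarrow> partner (partner e) = e"
proof -
  assume e: "e \<in> Cedge"
  show ?thesis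
  proof (cases "e \<in> C")
    case True
    then have "partner (partner e) = cnext (opp (cin e))" using partner_C partner_Crev cin_Crev by simp
    also have "\<dots> = e" unfolding cin_def using True cprev_in C_H cnext_cprev by simp
    finally show ?thesis .
  next
    case False
    then have x: "e \<in> Crev" using e unfolding Cedge_def by blast
    then have c: "opp e \<in> C" using opp_Crev by blast
    have "partner (partner e) = cin (cnext (opp e))" using partner_Crev[OF x] partner_C cnext_in[OF c] by simp
    also have "\<dots> = e" using cin_cnext[OF c] Crev_H[OF x] by simp
    finally show ?thesis .
  qed
qed

lemma partner_ne: "e \<in> Cedge \<Longrightarrow> partner e \<noteq> e"
proof -
  assume e: "e \<in> Cedge"
  show ?thesis
  proof (cases "e \<in> C")
    case True then show ?thesis using partner_C cin_neq by simp
  next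
    case False
    then have x: "e \<in> Crev" using e unfolding Cedge_def by blast
    then have "partner e \<in> C" using partner_Crev opp_Crev cnext_in by simp
    then show ?thesis using False by metis
  qed
qed

lemma partner_Cd_iff: "e \<in> Cedge \<Longrightarrow> partner e \<in> C \<longleftrightarrow> e \<notin> C"
proof -
  assume e: "e \<in> Cedge"
  show ?thesis
  proof (cases "e \<in> C")
    case True then show ?thesis using partner_C cin_Crev C_notin_Crev by metis
  next
    case False
    then have x: "e \<in> Crev" using e unfolding Cedge_def by blast
    then show ?thesis using partner_Crev opp_Crev cnext_in False by simp
  qed
qed

lemma finite_Cedge: "finite Cedge"
proof (rule finite_subset[OF _ finite_H])
  show "Cedge \<subseteq> H" using Cedge_H by blast
qed

lemma card_Cedge: "card Cedge = 2 * card C"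
proof -
  have "inj_on opp C" using inj_on_subset[OF opp_perm.inj C_subset] .
  then have "card Crev = card C" unfolding Crev_def by (rule card_image)
  moreover have "C \<inter> Crev = {}" using C_notin_Crev by blast
  moreover have "finite Crev" using finite_C unfolding Crev_def by simp
  ultimately show ?thesis unfolding Cedge_def using finite_C by (simp add: card_Un_disjoint)
qed

lemma Cedge_tail: "e \<in> Cedge \<Longrightarrow> \<exists>c\<in>C. tail nxt e = tail nxt c"
proof -
  assume e: "e \<in> Cedge"
  show ?thesis
  proof (cases "e \<in> C")
    case True then show ?thesis by blast
  next
    case False
    then have "e \<in> Crev" using e unfolding Cedge_def by blast
    then obtain c where c: "c \<in> C" "e = cin c" using Crev_cin by blast
    have "tail nxt e = tail nxt c" using tail_cin[OF c(1)] c(2) by simp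
    then show ?thesis using c(1) by blast
  qed
qed

definition cin_pos :: "'a \<Rightarrow> nat" where "cin_pos c = cw_dist nxt c (cin c)"

lemma cin_in_tail: "c \<in> C \<Longrightarrow> cin c \<in> tail nxt c"
  using tail_cin tail_mem by simp

lemma
  assumes c: "c \<in> C"
  shows cin_pos_lt_deg: "cin_pos c < deg c"
    and funpow_cin_pos: "(nxt ^^ cin_pos c) c = cin c"
    and cin_pos_gt_0: "0 < cin_pos c"
proof -
  show "cin_pos c < deg c" "(nxt ^^ cin_pos c) c = cin c"
    unfolding cin_pos_def using cw_dist_lt_deg funpow_cw_dist C_H[OF c] cin_in_tail[OF c] by auto
  then show "0 < cin_pos c" using cin_neq[OF c] by (metis funpow_0 gr0I)
qed

lemma funpow_notin_Cedge:
  assumes c: "c \<in> C" and m: "0 < m" "m < deg c" "m \<noteq> cin_pos c"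
  shows "(nxt ^^ m) c \<notin> Cedge"
proof
  assume e: "(nxt ^^ m) c \<in> Cedge"
  have t: "tail nxt ((nxt ^^ m) c) = tail nxt c"
    using tail_eqI[OF C_H[OF c] funpow_in_tail] .
  have h: "c \<in> H" using C_H[OF c] .
  from Cedge_at_tail[OF e c t] show False
  proof
    assume "(nxt ^^ m) c = c"
    then have "(nxt ^^ m) c = (nxt ^^ 0) c" by simp
    then show False using funpow_nxt_inj[OF h m(2)] deg_pos[OF h] m(1) by fastforce
  next
    assume "(nxt ^^ m) c = cin c"
    then have "(nxt ^^ m) c = (nxt ^^ cin_pos c) c" using funpow_cin_pos[OF c] by simp
    then show False using funpow_nxt_inj[OF h m(2) cin_pos_lt_deg[OF c]] m(3) by blast
  qed
qed

lemma funpow_H: "h \<in> H \<Longrightarrow> (nxt ^^ m) h \<in> H" using nxt_perm.funpow_in .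

end

context simple_cycle begin

definition cut_darts :: "('a \<times> bool) set" where
  "cut_darts = (\<lambda>h. (h, False)) ` H \<union> (\<lambda>h. (h, True)) ` Cedge"

definition cut_opp :: "'a \<times> bool \<Rightarrow> 'a \<times> bool" where
  "cut_opp p = (opp (fst p), if fst p \<in> Cedge then \<not> snd p else snd p)"

definition cut_nxt :: "'a \<times> bool \<Rightarrow> 'a \<times> bool" where
  "cut_nxt p = (if fst p \<in> Cedge \<and> \<not> snd p then (partner (fst p), True) else (nxt (fst p), False))"

lemma cut_darts_False: "(h, False) \<in> cut_darts \<longleftrightarrow> h \<in> H" unfolding cut_darts_def by auto
lemma cut_darts_True: "(h, True) \<in> cut_darts \<longleftrightarrow> h \<in> Cedge" unfolding cut_darts_def by auto

lemma cut_darts_cases [consumes 1, case_names lower upper]: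
  assumes "p \<in> cut_darts"
  obtains (lower) h where "p = (h, False)" "h \<in> H" | (upper) e where "p = (e, True)" "e \<in> Cedge"
  using assms unfolding cut_darts_def by blast

lemma fst_cut_dart: "p \<in> cut_darts \<Longrightarrow> fst p \<in> H"
  by (erule cut_darts_cases) (auto simp: Cedge_H)

lemma finite_cut_darts: "finite cut_darts" unfolding cut_darts_def using finite_H finite_Cedge by simp

lemma card_cut_darts: "card cut_darts = card H + card Cedge"
proof -
  have "card ((\<lambda>h. (h, False)) ` H) = card H" by (rule card_image) (simp add: inj_on_def)
  moreover have "card ((\<lambda>h. (h, True)) ` Cedge) = card Cedge" by (rule card_image) (simp add: inj_on_def)
  moreover have "(\<lambda>h. (h, False)) ` H \<inter> (\<lambda>h. (h, True)) ` Cedge = {}" by auto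
  ultimately show ?thesis unfolding cut_darts_def using finite_H finite_Cedge by (simp add: card_Un_disjoint)
qed

lemma opp_in_Cedge_iff: "h \<in> H \<Longrightarrow> opp h \<in> Cedge \<longleftrightarrow> h \<in> Cedge"
  using opp_Cedge opp_opp by metis

lemma cut_opp_False: "h \<in> H \<Longrightarrow> h \<notin> Cedge \<Longrightarrow> cut_opp (h, False) = (opp h, False)"
  unfolding cut_opp_def by simp
lemma cut_opp_False_Cedge: "h \<in> Cedge \<Longrightarrow> cut_opp (h, False) = (opp h, True)"
  unfolding cut_opp_def by simp
lemma cut_opp_True: "h \<in> Cedge \<Longrightarrow> cut_opp (h, True) = (opp h, False)"
  unfolding cut_opp_def by simp

lemma cut_nxt_False: "h \<notin> Cedge \<Longrightarrow> cut_nxt (h, False) = (nxt h, False)"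
  unfolding cut_nxt_def by simp
lemma cut_nxt_False_Cedge: "h \<in> Cedge \<Longrightarrow> cut_nxt (h, False) = (partner h, True)"
  unfolding cut_nxt_def by simp
lemma cut_nxt_True: "cut_nxt (h, True) = (nxt h, False)"
  unfolding cut_nxt_def by simp

lemma cut_opp_in: "p \<in> cut_darts \<Longrightarrow> cut_opp p \<in> cut_darts"
proof (erule cut_darts_cases)
  fix h assume p: "p = (h, False)" and h: "h \<in> H"
  show "cut_opp p \<in> cut_darts"
  proof (cases "h \<in> Cedge")
    case True then show ?thesis using p cut_opp_False_Cedge opp_Cedge cut_darts_True by simp
  next
    case False then show ?thesis using p h cut_opp_False opp_in cut_darts_False by simp
  qed
next
  fix e assume "p = (e, True)" "e \<in> Cedge"
  then show "cut_opp p \<in> cut_darts" using cut_opp_True opp_in Cedge_H cut_darts_False by simp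
qed

lemma cut_opp_cut_opp: "p \<in> cut_darts \<Longrightarrow> cut_opp (cut_opp p) = p"
proof (erule cut_darts_cases)
  fix h assume p: "p = (h, False)" and h: "h \<in> H"
  show "cut_opp (cut_opp p) = p"
  proof (cases "h \<in> Cedge")
    case True then show ?thesis using p cut_opp_False_Cedge opp_Cedge cut_opp_True h by simp
  next
    case False
    then have "opp h \<notin> Cedge" using opp_in_Cedge_iff h by simp
    then show ?thesis using p h cut_opp_False opp_in False by simp
  qed
next
  fix e assume "p = (e, True)" "e \<in> Cedge"
  then show "cut_opp (cut_opp p) = p" using cut_opp_True cut_opp_False_Cedge opp_Cedge Cedge_H by simp
qed

lemma cut_opp_neq: "p \<in> cut_darts \<Longrightarrow> cut_opp p \<noteq> p"
proof -
  assume "p \<in> cut_darts"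
  then have "opp (fst p) \<noteq> fst p" using opp_ne fst_cut_dart by blast
  then show ?thesis unfolding cut_opp_def by (cases p) auto
qed

lemma bij_cut_opp: "bij_betw cut_opp cut_darts cut_darts"
  by (rule bij_betw_byWitness[where f'=cut_opp]) (auto simp: cut_opp_cut_opp cut_opp_in)

lemma cut_nxt_in: "p \<in> cut_darts \<Longrightarrow> cut_nxt p \<in> cut_darts"
proof (erule cut_darts_cases)
  fix h assume p: "p = (h, False)" and h: "h \<in> H"
  show "cut_nxt p \<in> cut_darts"
  proof (cases "h \<in> Cedge")
    case True then show ?thesis using p cut_nxt_False_Cedge partner_in cut_darts_True by simp
  next
    case False then show ?thesis using p h cut_nxt_False nxt_in cut_darts_False by simp
  qed
next
  fix e assume "p = (e, True)" "e \<in> Cedge"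
  then show "cut_nxt p \<in> cut_darts" using cut_nxt_True nxt_in Cedge_H cut_darts_False by simp
qed

lemma cut_nxt_surj: "cut_darts \<subseteq> cut_nxt ` cut_darts"
proof
  fix q assume "q \<in> cut_darts"
  then show "q \<in> cut_nxt ` cut_darts"
  proof (rule cut_darts_cases)
    fix g assume q: "q = (g, False)" and g: "g \<in> H"
    have "g \<in> nxt ` H" using bij_nxt g by (simp add: bij_betw_def)
    then obtain h where h: "h \<in> H" "nxt h = g" by auto
    show ?thesis
    proof (cases "h \<in> Cedge")
      case True
      then have "cut_nxt (h, True) = q" using cut_nxt_True q h by simp
      moreover have "(h, True) \<in> cut_darts" using True cut_darts_True by simp
      ultimately show ?thesis by blast
    next
      case False
      then have "cut_nxt (h, False) = q" using cut_nxt_False q h by simp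
      moreover have "(h, False) \<in> cut_darts" using h cut_darts_False by simp
      ultimately show ?thesis by blast
    qed
  next
    fix e assume q: "q = (e, True)" and e: "e \<in> Cedge"
    have "cut_nxt (partner e, False) = q" using cut_nxt_False_Cedge[OF partner_in[OF e]] partner_partner[OF e] q by simp
    moreover have "(partner e, False) \<in> cut_darts" using cut_darts_False Cedge_H partner_in e by simp
    ultimately show ?thesis by blast
  qed
qed

lemma bij_cut_nxt: "bij_betw cut_nxt cut_darts cut_darts"
proof -
  have im: "cut_nxt ` cut_darts = cut_darts" using cut_nxt_surj cut_nxt_in by blast
  then have "card (cut_nxt ` cut_darts) = card cut_darts" by simp
  then have "inj_on cut_nxt cut_darts" using inj_on_iff_eq_card[OF finite_cut_darts] by blast
  then show ?thesis using im unfolding bij_betw_def by blast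
qed

definition cut_phi :: "'a \<times> bool \<Rightarrow> 'a \<times> bool" where "cut_phi = cut_nxt \<circ> cut_opp"

lemma cut_phi_False: "h \<in> H \<Longrightarrow> cut_phi (h, False) = (phi opp nxt h, False)"
proof -
  assume h: "h \<in> H"
  show ?thesis
  proof (cases "h \<in> Cedge")
    case True then show ?thesis unfolding cut_phi_def using cut_opp_False_Cedge cut_nxt_True phi_apply by simp
  next
    case False
    then have "opp h \<notin> Cedge" using opp_in_Cedge_iff h by simp
    then show ?thesis unfolding cut_phi_def using False cut_opp_False h cut_nxt_False phi_apply by simp
  qed
qed

lemma cut_phi_True: "e \<in> Cedge \<Longrightarrow> cut_phi (e, True) = (partner (opp e), True)"
  unfolding cut_phi_def using cut_opp_True cut_nxt_False_Cedge opp_Cedge by simp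

lemma bij_cut_phi: "bij_betw cut_phi cut_darts cut_darts"
  unfolding cut_phi_def using bij_betw_trans[OF bij_cut_opp bij_cut_nxt] .

lemma finite_perm_cut_opp: "finite_perm cut_opp cut_darts" using finite_cut_darts bij_cut_opp by unfold_locales
lemma finite_perm_cut_nxt: "finite_perm cut_nxt cut_darts" using finite_cut_darts bij_cut_nxt by unfold_locales
lemma finite_perm_cut_phi: "finite_perm cut_phi cut_darts" using finite_cut_darts bij_cut_phi by unfold_locales

lemma num_cycles_cut_opp: "2 * num_cycles cut_opp cut_darts = card cut_darts"
proof (rule finite_perm.num_cycles_involution[OF finite_perm_cut_opp])
  fix x assume "x \<in> cut_darts" then show "cut_opp (cut_opp x) = x \<and> cut_opp x \<noteq> x" using cut_opp_cut_opp cut_opp_neq by simp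
qed

lemma funpow_cut_phi_False: "h \<in> H \<Longrightarrow> (cut_phi ^^ k) (h, False) = ((phi opp nxt ^^ k) h, False)"
proof (induct k)
  case (Suc k)
  have "(phi opp nxt ^^ k) h \<in> H" using phi_perm.funpow_in[OF Suc.prems] .
  then show ?case using Suc cut_phi_False by simp
qed simp

lemma cycle_of_cut_phi_False: "h \<in> H \<Longrightarrow> cycle_of cut_phi (h, False) = (\<lambda>g. (g, False)) ` cycle_of (phi opp nxt) h"
proof -
  assume h: "h \<in> H"
  have "cycle_of cut_phi (h, False) = (\<lambda>k. (cut_phi ^^ k) (h, False)) ` UNIV" unfolding cycle_of_def by auto
  also have "\<dots> = (\<lambda>k. ((phi opp nxt ^^ k) h, False)) ` UNIV" using funpow_cut_phi_False[OF h] by simp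
  also have "\<dots> = (\<lambda>g. (g, False)) ` cycle_of (phi opp nxt) h" unfolding cycle_of_def by auto
  finally show ?thesis .
qed

lemma tail_cut_nxt: "p \<in> cut_darts \<Longrightarrow> tail nxt (fst (cut_nxt p)) = tail nxt (fst p)"
proof (erule cut_darts_cases)
  fix h assume p: "p = (h, False)" and h: "h \<in> H"
  show ?thesis
  proof (cases "h \<in> Cedge")
    case True then show ?thesis using p cut_nxt_False_Cedge partner_tail by simp
  next
    case False then show ?thesis using p cut_nxt_False tail_nxt h by simp
  qed
next
  fix e assume "p = (e, True)" "e \<in> Cedge"
  then show ?thesis using cut_nxt_True tail_nxt Cedge_H by simp
qed

lemma tail_cycle_of_cut_nxt: "p \<in> cut_darts \<Longrightarrow> q \<in> cycle_of cut_nxt p \<Longrightarrow> tail nxt (fst q) = tail nxt (fst p)"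
proof -
  assume p: "p \<in> cut_darts" and q: "q \<in> cycle_of cut_nxt p"
  have "cycle_of cut_nxt p \<subseteq> {q \<in> cut_darts. tail nxt (fst q) = tail nxt (fst p)}"
  proof (rule cycle_of_least)
    fix y assume "y \<in> {q \<in> cut_darts. tail nxt (fst q) = tail nxt (fst p)}"
    then show "cut_nxt y \<in> {q \<in> cut_darts. tail nxt (fst q) = tail nxt (fst p)}"
      using cut_nxt_in tail_cut_nxt by simp
  qed (use p in simp)
  then show ?thesis using q by blast
qed

lemma cut_nxt_splits_vertex: assumes c: "c \<in> C" shows "(c, True) \<notin> cycle_of cut_nxt (c, False)"
proof
  define B where "B = insert (cin c, True) {((nxt ^^ m) c, False) | m. cin_pos c < m \<and> m \<le> deg c}"
  have h: "c \<in> H" using C_H[OF c] .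
  have cB: "(c, False) \<in> B" unfolding B_def using funpow_deg[OF h] cin_pos_gt_0[OF c] cin_pos_lt_deg[OF c] funpow_cin_pos[OF c]
    by (auto intro!: exI[of _ "deg c"])
  have clo: "cut_nxt y \<in> B" if y: "y \<in> B" for y
  proof -
    from y have "y = (cin c, True) \<or> (\<exists>m. y = ((nxt ^^ m) c, False) \<and> cin_pos c < m \<and> m \<le> deg c)"
      unfolding B_def by blast
    then show ?thesis
    proof
      assume "y = (cin c, True)"
      then have "cut_nxt y = ((nxt ^^ Suc (cin_pos c)) c, False)" using cut_nxt_True funpow_cin_pos[OF c] by simp
      then show ?thesis unfolding B_def using cin_pos_lt_deg[OF c] by (auto intro!: exI[of _ "Suc (cin_pos c)"])
    next
      assume "\<exists>m. y = ((nxt ^^ m) c, False) \<and> cin_pos c < m \<and> m \<le> deg c"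
      then obtain m where m: "y = ((nxt ^^ m) c, False)" "cin_pos c < m" "m \<le> deg c" by blast
      show ?thesis
      proof (cases "m = deg c")
        case True
        then have "y = (c, False)" using m funpow_deg[OF h] by simp
        then have "cut_nxt y = (cin c, True)" using cut_nxt_False_Cedge partner_C c unfolding Cedge_def by simp
        then show ?thesis unfolding B_def by simp
      next
        case False
        then have "(nxt ^^ m) c \<notin> Cedge" using funpow_notin_Cedge[OF c] m cin_pos_gt_0[OF c] by simp
        then have "cut_nxt y = ((nxt ^^ Suc m) c, False)" using m cut_nxt_False by simp
        then show ?thesis unfolding B_def using m False by (auto intro!: exI[of _ "Suc m"])
      qed
    qed
  qed
  have "cycle_of cut_nxt (c, False) \<subseteq> B" by (rule cycle_of_least[OF clo cB])
  moreover assume "(c, True) \<in> cycle_of cut_nxt (c, False)"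
  ultimately have "(c, True) \<in> B" by blast
  then show False unfolding B_def using cin_neq[OF c] by auto
qed

definition vertex_rep :: "'a set \<Rightarrow> 'a" where
  "vertex_rep v = (SOME h. h \<in> H \<and> tail nxt h = v \<and> (v \<in> tail nxt ` C \<longrightarrow> h \<in> C))"

lemma vertex_rep_props:
  assumes v: "v \<in> vertices H nxt"
  shows "vertex_rep v \<in> H" "tail nxt (vertex_rep v) = v" "v \<in> tail nxt ` C \<Longrightarrow> vertex_rep v \<in> C"
proof -
  have ex: "\<exists>h. h \<in> H \<and> tail nxt h = v \<and> (v \<in> tail nxt ` C \<longrightarrow> h \<in> C)"
  proof (cases "v \<in> tail nxt ` C")
    case True
    then obtain c where "c \<in> C" "v = tail nxt c" by blast
    then show ?thesis using C_H by blast
  next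
    case False
    obtain h where "h \<in> H" "v = tail nxt h" using v unfolding vertices_def by blast
    then show ?thesis using False by blast
  qed
  have "vertex_rep v \<in> H \<and> tail nxt (vertex_rep v) = v \<and> (v \<in> tail nxt ` C \<longrightarrow> vertex_rep v \<in> C)"
    unfolding vertex_rep_def by (rule someI_ex[OF ex])
  then show "vertex_rep v \<in> H" "tail nxt (vertex_rep v) = v" "v \<in> tail nxt ` C \<Longrightarrow> vertex_rep v \<in> C" by auto
qed

lemma cycle_of_cut_nxt_tail:
  assumes "p \<in> cut_darts" and "cycle_of cut_nxt p = cycle_of cut_nxt q"
  shows "tail nxt (fst q) = tail nxt (fst p)"
  using tail_cycle_of_cut_nxt[OF assms(1)] assms(2) cycle_of_self[of q cut_nxt] by metis

lemma num_cycles_cut_nxt: "card (vertices H nxt) + card C \<le> num_cycles cut_nxt cut_darts"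
proof -
  define lower where "lower = (\<lambda>v. cycle_of cut_nxt (vertex_rep v, False)) ` vertices H nxt"
  define upper where "upper = (\<lambda>c. cycle_of cut_nxt (c, True)) ` C"
  have rep: "(vertex_rep v, False) \<in> cut_darts" if "v \<in> vertices H nxt" for v
    using vertex_rep_props[OF that] cut_darts_False by simp
  have up: "(c, True) \<in> cut_darts" if "c \<in> C" for c
    using that cut_darts_True unfolding Cedge_def by simp
  have "card lower = card (vertices H nxt)"
    unfolding lower_def
  proof (rule card_image, rule inj_onI)
    fix v w assume v: "v \<in> vertices H nxt" and w: "w \<in> vertices H nxt"
      and eq: "cycle_of cut_nxt (vertex_rep v, False) = cycle_of cut_nxt (vertex_rep w, False)"
    show "v = w" using cycle_of_cut_nxt_tail[OF rep[OF v] eq] vertex_rep_props(2)[OF v] vertex_rep_props(2)[OF w]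
      by simp
  qed
  moreover have "card upper = card C"
    unfolding upper_def
  proof (rule card_image, rule inj_onI)
    fix c c' assume c: "c \<in> C" and c': "c' \<in> C"
      and eq: "cycle_of cut_nxt (c, True) = cycle_of cut_nxt (c', True)"
    show "c = c'" using cycle_of_cut_nxt_tail[OF up[OF c] eq] inj_onD[OF inj_on_tail _ c' c] by simp
  qed
  moreover have "cycle_of cut_nxt (vertex_rep v, False) \<noteq> cycle_of cut_nxt (c, True)"
    if v: "v \<in> vertices H nxt" and c: "c \<in> C" for v c
  proof
    assume eq: "cycle_of cut_nxt (vertex_rep v, False) = cycle_of cut_nxt (c, True)"
    then have "tail nxt c = v" using cycle_of_cut_nxt_tail[OF rep[OF v] eq] vertex_rep_props(2)[OF v] by simp
    then have "vertex_rep v \<in> C" "tail nxt (vertex_rep v) = tail nxt c"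
      using vertex_rep_props[OF v] c by auto
    then have "vertex_rep v = c" using inj_onD[OF inj_on_tail] c by blast
    then show False using eq cut_nxt_splits_vertex[OF c] cycle_of_self[of "(c, True)" cut_nxt] by simp
  qed
  then have "lower \<inter> upper = {}" unfolding lower_def upper_def by blast
  moreover have "finite lower" "finite upper"
    unfolding lower_def upper_def using finite_vertices finite_C by simp_all
  ultimately have "card (lower \<union> upper) = card (vertices H nxt) + card C"
    by (simp add: card_Un_disjoint)
  moreover have "lower \<union> upper \<subseteq> cycle_of cut_nxt ` cut_darts"
    unfolding lower_def upper_def using rep up by blast
  then have "card (lower \<union> upper) \<le> num_cycles cut_nxt cut_darts"
    unfolding num_cycles_def using finite_cut_darts by (simp add: card_mono)
  ultimately show ?thesis by simp
qed

lemma num_cycles_cut_phi: "card (faces H opp nxt) + 2 \<le> num_cycles cut_phi cut_darts"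
proof -
  interpret Q: finite_perm cut_phi cut_darts by (rule finite_perm_cut_phi)
  define Set1 where "Set1 = (\<lambda>h. cycle_of cut_phi (h, False)) ` H"
  define O1 where "O1 = cycle_of cut_phi (c0, True)"
  define O2 where "O2 = cycle_of cut_phi (cin c0, True)"
  have c0E: "c0 \<in> Cedge" using c0_in unfolding Cedge_def by simp
  have x0E: "cin c0 \<in> Cedge" using cin_Crev[OF c0_in] unfolding Cedge_def by simp
  have S1: "Set1 = (\<lambda>Y. (\<lambda>g. (g, False)) ` Y) ` (cycle_of (phi opp nxt) ` H)"
    unfolding Set1_def image_image using cycle_of_cut_phi_False by (intro image_cong) simp_all
  have cS1: "card Set1 = card (faces H opp nxt)"
  proof -
    have "inj_on (\<lambda>Y. (\<lambda>g. (g, False)) ` Y) (cycle_of (phi opp nxt) ` H)"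
      by (rule inj_onI) (auto simp: image_iff set_eq_iff)
    then show ?thesis unfolding S1 card_faces_num_cycles num_cycles_def by (rule card_image)
  qed
  have O1sub: "O1 \<subseteq> {(c, True) | c. c \<in> C}" unfolding O1_def
  proof (rule cycle_of_least)
    fix y assume "y \<in> {(c, True) | c. c \<in> C}"
    then obtain c where c: "c \<in> C" "y = (c, True)" by blast
    then have "cut_phi y = (cnext c, True)" using cut_phi_True partner_Crev opp_C C_H unfolding Cedge_def by simp
    then show "cut_phi y \<in> {(c, True) | c. c \<in> C}" using cnext_in[OF c(1)] by simp
  qed (use c0_in in simp)
  have O2sub: "O2 \<subseteq> {(x, True) | x. x \<in> Crev}" unfolding O2_def
  proof (rule cycle_of_least)
    fix y assume "y \<in> {(x, True) | x. x \<in> Crev}"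
    then obtain x where x: "x \<in> Crev" "y = (x, True)" by blast
    then have "cut_phi y = (cin (opp x), True)" using cut_phi_True partner_C opp_Crev unfolding Cedge_def by simp
    then show "cut_phi y \<in> {(x, True) | x. x \<in> Crev}" using cin_Crev opp_Crev x(1) by simp
  qed (use cin_Crev[OF c0_in] in simp)
  have S1F: "X \<subseteq> {(g, False) | g. True}" if "X \<in> Set1" for X
    using that unfolding S1 by auto
  have O1n: "O1 \<notin> Set1" using S1F[of O1] cycle_of_self[of "(c0, True)" cut_phi] unfolding O1_def by blast
  have O2n: "O2 \<notin> Set1" using S1F[of O2] cycle_of_self[of "(cin c0, True)" cut_phi] unfolding O2_def by blast
  have O12: "O1 \<noteq> O2" using O2sub cycle_of_self[of "(c0, True)" cut_phi] C_notin_Crev[OF c0_in] unfolding O1_def by blast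
  have sub: "Set1 \<union> {O1, O2} \<subseteq> cycle_of cut_phi ` cut_darts"
    unfolding Set1_def O1_def O2_def using cut_darts_False cut_darts_True c0E x0E by auto
  have finS1: "finite Set1" unfolding Set1_def using finite_H by simp
  have "card (Set1 \<union> {O1, O2}) = card Set1 + 2"
    using O1n O2n O12 finS1 by (simp add: card_insert_if)
  moreover have "card (Set1 \<union> {O1, O2}) \<le> card (cycle_of cut_phi ` cut_darts)"
    by (rule card_mono) (use finite_cut_darts sub in auto)
  ultimately show ?thesis using cS1 unfolding num_cycles_def by simp
qed

end

context simple_cycle begin

definition dual_adj :: "('a set \<times> 'a set) set" where
  "dual_adj = {(face opp nxt h, face opp nxt (opp h)) | h. h \<in> H \<and> h \<notin> Cedge}"

definition right_faces :: "'a set set" where "right_faces = {f. \<exists>x\<in>Crev. (face opp nxt x, f) \<in> dual_adj\<^sup>*}"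
definition left_faces :: "'a set set" where "left_faces = {f. \<exists>c\<in>C. (face opp nxt c, f) \<in> dual_adj\<^sup>*}"

abbreviation "cut_rel \<equiv> component_rel cut_nxt cut_opp cut_darts"

lemma cut_rel_opp: "p \<in> cut_darts \<Longrightarrow> (p, cut_opp p) \<in> cut_rel" by (rule component_rel_second)
lemma cut_rel_nxt: "p \<in> cut_darts \<Longrightarrow> (p, cut_nxt p) \<in> cut_rel" by (rule component_rel_first)

lemma cut_rel_phi: "p \<in> cut_darts \<Longrightarrow> (p, cut_phi p) \<in> cut_rel"
proof -
  assume p: "p \<in> cut_darts"
  have "(p, cut_opp p) \<in> cut_rel" using cut_rel_opp[OF p] .
  moreover have "(cut_opp p, cut_nxt (cut_opp p)) \<in> cut_rel" using cut_rel_nxt[OF cut_opp_in[OF p]] .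
  ultimately show ?thesis unfolding cut_phi_def using component_rel_trans by fastforce
qed

lemma cut_rel_funpow_phi: "p \<in> cut_darts \<Longrightarrow> (p, (cut_phi ^^ k) p) \<in> cut_rel"
proof (induct k)
  case (Suc k)
  interpret Q: finite_perm cut_phi cut_darts by (rule finite_perm_cut_phi)
  have "(cut_phi ^^ k) p \<in> cut_darts" using Q.funpow_in[OF Suc.prems] .
  then have "((cut_phi ^^ k) p, cut_phi ((cut_phi ^^ k) p)) \<in> cut_rel" by (rule cut_rel_phi)
  then show ?case using Suc component_rel_trans by fastforce
qed simp

lemma cut_rel_face: "h \<in> H \<Longrightarrow> g \<in> face opp nxt h \<Longrightarrow> ((h, False), (g, False)) \<in> cut_rel"
proof -
  assume h: "h \<in> H" and g: "g \<in> face opp nxt h"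
  then obtain k where k: "g = (phi opp nxt ^^ k) h" unfolding face_eq_cycle_of cycle_of_def by auto
  have "(cut_phi ^^ k) (h, False) = (g, False)" using funpow_cut_phi_False[OF h] k by simp
  then show ?thesis using cut_rel_funpow_phi[of "(h, False)" k] h cut_darts_False by simp
qed

lemma cut_rel_dual_adj:
  assumes "(face opp nxt e, f) \<in> dual_adj\<^sup>*" and e: "e \<in> H"
  shows "\<And>g. g \<in> f \<Longrightarrow> ((e, False), (g, False)) \<in> cut_rel"
  using assms(1)
proof (induct rule: rtrancl_induct)
  case base then show ?case using cut_rel_face[OF e] by simp
next
  case (step f1 f2)
  from step(2) obtain h0 where h0: "h0 \<in> H" "h0 \<notin> Cedge" "f1 = face opp nxt h0" "f2 = face opp nxt (opp h0)"
    unfolding dual_adj_def by blast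
  have "((e, False), (h0, False)) \<in> cut_rel" using step(3)[of h0] h0(3) face_self by simp
  moreover have "((h0, False), (opp h0, False)) \<in> cut_rel" using cut_rel_opp[of "(h0, False)"] h0 cut_darts_False cut_opp_False by simp
  moreover have "((opp h0, False), (g, False)) \<in> cut_rel" using cut_rel_face[OF opp_in[OF h0(1)]] step(4) h0(4) by simp
  ultimately show ?case using component_rel_trans by metis
qed

lemma dual_adj_nonempty:
  assumes "(face opp nxt e, f) \<in> dual_adj\<^sup>*" and e: "e \<in> H"
  shows "\<exists>g\<in>H. g \<in> f"
  using assms(1)
proof (induct rule: rtrancl_induct)
  case base then show ?case using e face_self by blast
next
  case (step f1 f2)
  from step(2) obtain h0 where h0: "h0 \<in> H" "f2 = face opp nxt (opp h0)"
    unfolding dual_adj_def by blast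
  then show ?case using opp_in face_self by blast
qed

lemma cut_rel_upper_step: "c \<in> C \<Longrightarrow> ((c, True), (cnext c, True)) \<in> cut_rel"
proof -
  assume c: "c \<in> C"
  have cE: "c \<in> Cedge" using c unfolding Cedge_def by simp
  have oE: "opp c \<in> Cedge" using opp_Cedge[OF cE] .
  have "((c, True), (opp c, False)) \<in> cut_rel" using cut_rel_opp[of "(c, True)"] cut_darts_True cE cut_opp_True by simp
  moreover have "((opp c, False), (cnext c, True)) \<in> cut_rel"
    using cut_rel_nxt[of "(opp c, False)"] cut_darts_False Cedge_H[OF oE] cut_nxt_False_Cedge[OF oE] partner_Crev[OF opp_C[OF c]] C_H[OF c] by simp
  ultimately show ?thesis using component_rel_trans by metis
qed

lemma cut_rel_lower_step: "c \<in> C \<Longrightarrow> ((c, False), (cprev c, False)) \<in> cut_rel"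
proof -
  assume c: "c \<in> C"
  have cE: "c \<in> Cedge" using c unfolding Cedge_def by simp
  have xE: "cin c \<in> Cedge" using cin_Crev[OF c] unfolding Cedge_def by simp
  have "((c, False), (cin c, True)) \<in> cut_rel"
    using cut_rel_nxt[of "(c, False)"] cut_darts_False C_H[OF c] cut_nxt_False_Cedge[OF cE] partner_C[OF c] by simp
  moreover have "((cin c, True), (cprev c, False)) \<in> cut_rel"
    using cut_rel_opp[of "(cin c, True)"] cut_darts_True xE cut_opp_True[OF xE] C_H[OF cprev_in[OF c]] unfolding cin_def by simp
  ultimately show ?thesis using component_rel_trans by metis
qed

lemma cut_rel_upper: "c \<in> C \<Longrightarrow> ((c0, True), (c, True)) \<in> cut_rel"
proof -
  assume c: "c \<in> C"
  have "((c0, True), ((cnext ^^ k) c0, True)) \<in> cut_rel" for k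
  proof (induct k)
    case (Suc k)
    have "(cnext ^^ k) c0 \<in> C" using cnext_perm.funpow_in[OF c0_in] .
    then show ?case using cut_rel_upper_step Suc component_rel_trans by fastforce
  qed simp
  moreover obtain k where "c = (cnext ^^ k) c0" using C_cycle c unfolding cycle_of_def by blast
  ultimately show ?thesis by simp
qed

lemma cut_rel_lower: "c \<in> C \<Longrightarrow> ((c0, False), (c, False)) \<in> cut_rel"
proof -
  assume c: "c \<in> C"
  have "((c0, False), ((cnext ^^ k) c0, False)) \<in> cut_rel" for k
  proof (induct k)
    case (Suc k)
    have ck: "(cnext ^^ k) c0 \<in> C" using cnext_perm.funpow_in[OF c0_in] .
    have "((cnext (((cnext ^^ k) c0)), False), ((cnext ^^ k) c0, False)) \<in> cut_rel"
      using cut_rel_lower_step[OF cnext_in[OF ck]] cprev_cnext[OF ck] by simp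
    then show ?case using Suc component_rel_trans component_rel_sym by fastforce
  qed simp
  moreover obtain k where "c = (cnext ^^ k) c0" using C_cycle c unfolding cycle_of_def by blast
  ultimately show ?thesis by simp
qed

lemma cut_rel_Cedge_two_classes:
  assumes e: "e \<in> Cedge"
  shows "((e, False), (c0, True)) \<in> cut_rel \<or> ((e, False), (c0, False)) \<in> cut_rel"
    and "((e, True), (c0, True)) \<in> cut_rel \<or> ((e, True), (c0, False)) \<in> cut_rel"
proof -
  have "(((e, False), (c0, True)) \<in> cut_rel \<or> ((e, False), (c0, False)) \<in> cut_rel) \<and>
        (((e, True), (c0, True)) \<in> cut_rel \<or> ((e, True), (c0, False)) \<in> cut_rel)"
  proof (cases "e \<in> C")
    case True
    have "((e, False), (c0, False)) \<in> cut_rel" using component_rel_sym[OF cut_rel_lower[OF True]] .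
    moreover have "((e, True), (c0, True)) \<in> cut_rel" using component_rel_sym[OF cut_rel_upper[OF True]] .
    ultimately show ?thesis by blast
  next
    case False
    then have x: "e \<in> Crev" using e unfolding Cedge_def by blast
    then obtain c where c: "c \<in> C" "e = opp c" unfolding Crev_def by blast
    have cE: "c \<in> Cedge" using c unfolding Cedge_def by simp
    have "((c, True), (e, False)) \<in> cut_rel" using cut_rel_opp[of "(c, True)"] cut_darts_True cE cut_opp_True c by simp
    then have "((e, False), (c0, True)) \<in> cut_rel" using cut_rel_upper[OF c(1)] component_rel_sym component_rel_trans by metis
    moreover obtain c' where c': "c' \<in> C" "e = cin c'" using Crev_cin[OF x] by blast
    have c'E: "c' \<in> Cedge" using c' unfolding Cedge_def by simp
    have "((c', False), (e, True)) \<in> cut_rel"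
      using cut_rel_nxt[of "(c', False)"] cut_darts_False C_H[OF c'(1)] cut_nxt_False_Cedge[OF c'E] partner_C[OF c'(1)] c'(2) by simp
    then have "((e, True), (c0, False)) \<in> cut_rel" using cut_rel_lower[OF c'(1)] component_rel_sym component_rel_trans by metis
    ultimately show ?thesis by blast
  qed
  then show "((e, False), (c0, True)) \<in> cut_rel \<or> ((e, False), (c0, False)) \<in> cut_rel"
    and "((e, True), (c0, True)) \<in> cut_rel \<or> ((e, True), (c0, False)) \<in> cut_rel" by blast+
qed

lemma cut_rel_two_classes:
  assumes p: "p \<in> cut_darts"
  shows "(p, (c0, True)) \<in> cut_rel \<or> (p, (c0, False)) \<in> cut_rel"
proof -
  have H_darts: "((h, False), (c0, True)) \<in> cut_rel \<or> ((h, False), (c0, False)) \<in> cut_rel" if h: "h \<in> H" for h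
  proof -
    have "(h, c0) \<in> ({(x, opp x) | x. x \<in> H} \<union> {(x, nxt x) | x. x \<in> H})\<^sup>*"
      using connected[OF h C_H[OF c0_in]] .
    then show ?thesis using h
    proof (induct rule: converse_rtrancl_induct)
      case (step y z)
      show ?case
      proof (cases "y \<in> Cedge")
        case True then show ?thesis using cut_rel_Cedge_two_classes(1) by blast
      next
        case False
        from step(1) have y: "y \<in> H" and "z = opp y \<or> z = nxt y" by blast+
        then have "((y, False), (z, False)) \<in> cut_rel"
          using cut_rel_opp[of "(y, False)"] cut_rel_nxt[of "(y, False)"] cut_darts_False[of y]
            cut_opp_False[OF y False] cut_nxt_False[OF False] by fastforce
        moreover have "z \<in> H" using \<open>z = opp y \<or> z = nxt y\<close> opp_in[OF y] nxt_in[OF y] by blast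
        ultimately show ?thesis using step(3) component_rel_trans by metis
      qed
    qed simp
  qed
  from p show ?thesis
  proof (cases rule: cut_darts_cases)
    case (lower h)
    then show ?thesis using H_darts[of h] by simp
  next
    case (upper e)
    then show ?thesis using cut_rel_Cedge_two_classes(2)[of e] by simp
  qed
qed

lemma two_le_card_cut_components: "2 \<le> card (cut_darts // cut_rel)"
proof -
  have "num_cycles cut_nxt cut_darts + num_cycles cut_opp cut_darts + num_cycles cut_phi cut_darts
        \<le> card cut_darts + 2 * card (cut_darts // cut_rel)"
    using genus_inequality[OF finite_cut_darts bij_cut_nxt bij_cut_opp] unfolding cut_phi_def .
  moreover have "2 * num_cycles cut_opp cut_darts = card cut_darts" by (rule num_cycles_cut_opp)
  moreover have "card cut_darts = 2 * card (edges H opp) + 2 * card C"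
    using card_cut_darts card_Cedge card_darts_twice_edges by simp
  ultimately have "card (vertices H nxt) + card (faces H opp nxt) + 2 \<le> card (edges H opp) + 2 * card (cut_darts // cut_rel)"
    using num_cycles_cut_nxt num_cycles_cut_phi by linarith
  then show ?thesis using euler by linarith
qed

lemma sides_meet_imp_cut_rel:
  assumes "right_faces \<inter> left_faces \<noteq> {}"
  shows "((c0, True), (c0, False)) \<in> cut_rel"
proof -
  obtain f where f: "f \<in> right_faces" "f \<in> left_faces" using assms by blast
  then obtain x c where x: "x \<in> Crev" "(face opp nxt x, f) \<in> dual_adj\<^sup>*"
    and c: "c \<in> C" "(face opp nxt c, f) \<in> dual_adj\<^sup>*" unfolding right_faces_def left_faces_def by blast
  obtain g where g: "g \<in> H" "g \<in> f" using dual_adj_nonempty[OF c(2) C_H[OF c(1)]] by blast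
  have "((x, False), (g, False)) \<in> cut_rel" using cut_rel_dual_adj[OF x(2) Crev_H[OF x(1)] g(2)] .
  moreover have "((c, False), (g, False)) \<in> cut_rel" using cut_rel_dual_adj[OF c(2) C_H[OF c(1)] g(2)] .
  ultimately have xc: "((x, False), (c, False)) \<in> cut_rel" using component_rel_sym component_rel_trans by metis
  obtain c1 where c1: "c1 \<in> C" "x = opp c1" using x(1) unfolding Crev_def by blast
  have "c1 \<in> Cedge" using c1 unfolding Cedge_def by simp
  then have "((c1, True), (x, False)) \<in> cut_rel" using cut_rel_opp[of "(c1, True)"] cut_darts_True cut_opp_True c1 by simp
  then have "((c0, True), (x, False)) \<in> cut_rel" using cut_rel_upper[OF c1(1)] component_rel_trans by metis
  then show ?thesis using xc cut_rel_lower[OF c(1)] component_rel_sym component_rel_trans by metis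
qed

theorem left_right_faces_disjoint: "right_faces \<inter> left_faces = {}"
proof (rule ccontr)
  assume "right_faces \<inter> left_faces \<noteq> {}"
  note upper_lower = sides_meet_imp_cut_rel[OF this]
  have "cut_rel `` {p} = cut_rel `` {(c0, False)}" if "p \<in> cut_darts" for p
  proof (rule component_rel_Image_eq)
    from cut_rel_two_classes[OF that] show "(p, (c0, False)) \<in> cut_rel"
      using component_rel_trans[OF _ upper_lower] by blast
  qed
  then have "cut_darts // cut_rel = (\<lambda>_. cut_rel `` {(c0, False)}) ` cut_darts"
    unfolding quotient_eq_image by (rule image_cong[OF refl])
  also have "\<dots> = {cut_rel `` {(c0, False)}}"
    using cut_darts_False C_H[OF c0_in] by (intro image_constant[of "(c0, False)"]) simp
  finally show False using two_le_card_cut_components by simp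
qed

end

context simple_cycle begin

lemma dual_adjI: "h \<in> H \<Longrightarrow> h \<notin> Cedge \<Longrightarrow> (face opp nxt h, face opp nxt (opp h)) \<in> dual_adj"
  unfolding dual_adj_def by blast

lemma dual_adj_sym: "(f, g) \<in> dual_adj \<Longrightarrow> (g, f) \<in> dual_adj"
proof -
  assume "(f, g) \<in> dual_adj"
  then obtain h where h: "h \<in> H" "h \<notin> Cedge" "f = face opp nxt h" "g = face opp nxt (opp h)"
    unfolding dual_adj_def by blast
  have "opp h \<in> H" "opp h \<notin> Cedge" using opp_in[OF h(1)] opp_in_Cedge_iff[OF h(1)] h(2) by auto
  then have "(face opp nxt (opp h), face opp nxt (opp (opp h))) \<in> dual_adj" by (rule dual_adjI)
  then show ?thesis using h by simp
qed

lemma dual_adj_rtrancl_sym: "(f, g) \<in> dual_adj\<^sup>* \<Longrightarrow> (g, f) \<in> dual_adj\<^sup>*"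
proof -
  have "sym dual_adj" unfolding sym_def using dual_adj_sym by blast
  then have "sym (dual_adj\<^sup>*)" by (rule sym_rtrancl)
  then show "(f, g) \<in> dual_adj\<^sup>* \<Longrightarrow> (g, f) \<in> dual_adj\<^sup>*" unfolding sym_def by blast
qed

lemma dual_adj_nxt: "h \<in> H \<Longrightarrow> h \<notin> Cedge \<Longrightarrow> (face opp nxt h, face opp nxt (nxt h)) \<in> dual_adj"
  using dual_adjI face_nxt by simp

lemma right_faces_closed: "f \<in> right_faces \<Longrightarrow> (f, g) \<in> dual_adj\<^sup>* \<Longrightarrow> g \<in> right_faces"
proof -
  assume "f \<in> right_faces" "(f, g) \<in> dual_adj\<^sup>*"
  then obtain x where "x \<in> Crev" "(face opp nxt x, f) \<in> dual_adj\<^sup>*" unfolding right_faces_def by blast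
  then show "g \<in> right_faces" unfolding right_faces_def using rtrancl_trans[OF _ \<open>(f, g) \<in> dual_adj\<^sup>*\<close>] by blast
qed
lemma left_faces_closed: "f \<in> left_faces \<Longrightarrow> (f, g) \<in> dual_adj\<^sup>* \<Longrightarrow> g \<in> left_faces"
proof -
  assume "f \<in> left_faces" "(f, g) \<in> dual_adj\<^sup>*"
  then obtain x where "x \<in> C" "(face opp nxt x, f) \<in> dual_adj\<^sup>*" unfolding left_faces_def by blast
  then show "g \<in> left_faces" unfolding left_faces_def using rtrancl_trans[OF _ \<open>(f, g) \<in> dual_adj\<^sup>*\<close>] by blast
qed
lemma right_faces_closed': "f \<in> right_faces \<Longrightarrow> (g, f) \<in> dual_adj\<^sup>* \<Longrightarrow> g \<in> right_faces"
  using right_faces_closed dual_adj_rtrancl_sym by metis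
lemma left_faces_closed': "f \<in> left_faces \<Longrightarrow> (g, f) \<in> dual_adj\<^sup>* \<Longrightarrow> g \<in> left_faces"
  using left_faces_closed dual_adj_rtrancl_sym by metis

lemma face_Crev_right: "x \<in> Crev \<Longrightarrow> face opp nxt x \<in> right_faces" unfolding right_faces_def by blast
lemma face_C_left: "c \<in> C \<Longrightarrow> face opp nxt c \<in> left_faces" unfolding left_faces_def by blast

lemma faces_left_or_right: "h \<in> H \<Longrightarrow> face opp nxt h \<in> right_faces \<union> left_faces"
proof -
  assume h: "h \<in> H"
  have "(h, c0) \<in> ({(x, opp x) | x. x \<in> H} \<union> {(x, nxt x) | x. x \<in> H})\<^sup>*"
    using connected[OF h C_H[OF c0_in]] .
  then show ?thesis
  proof (induct rule: converse_rtrancl_induct)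
    case base then show ?case using face_C_left[OF c0_in] by simp
  next
    case (step y z)
    from step(1) have yz: "y \<in> H" "z = opp y \<or> z = nxt y" by blast+
    show ?case
    proof (cases "y \<in> Cedge")
      case True then show ?thesis using face_Crev_right face_C_left unfolding Cedge_def by blast
    next
      case False
      have "(face opp nxt y, face opp nxt z) \<in> dual_adj" using yz dual_adjI[OF yz(1) False] dual_adj_nxt[OF yz(1) False] by blast
      then have "(face opp nxt y, face opp nxt z) \<in> dual_adj\<^sup>*" by blast
      then show ?thesis using step(3) right_faces_closed' left_faces_closed' by blast
    qed
  qed
qed

lemma dual_adj_rotation:
  assumes h: "h \<in> H" and ne: "\<And>t. a \<le> t \<Longrightarrow> t < b \<Longrightarrow> (nxt ^^ t) h \<notin> Cedge"
  shows "a \<le> m \<Longrightarrow> m \<le> b \<Longrightarrow> (face opp nxt ((nxt ^^ a) h), face opp nxt ((nxt ^^ m) h)) \<in> dual_adj\<^sup>*"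
proof (induct m)
  case 0 then show ?case by simp
next
  case (Suc m)
  show ?case
  proof (cases "a = Suc m")
    case True then show ?thesis by simp
  next
    case False
    then have am: "a \<le> m" "m < b" using Suc by auto
    have g: "(nxt ^^ m) h \<in> H" using funpow_H[OF h] .
    have "(face opp nxt ((nxt ^^ m) h), face opp nxt (nxt ((nxt ^^ m) h))) \<in> dual_adj"
      using dual_adj_nxt[OF g ne[OF am]] .
    then show ?thesis using Suc(1)[OF am(1)] am by simp
  qed
qed

lemma corner_right_faces: assumes c: "c \<in> C" and m: "0 < m" "m \<le> cin_pos c"
  shows "face opp nxt ((nxt ^^ m) c) \<in> right_faces"
proof -
  have ne: "(nxt ^^ t) c \<notin> Cedge" if "1 \<le> t" "t < cin_pos c" for t
    using funpow_notin_Cedge[OF c] that cin_pos_gt_0[OF c] cin_pos_lt_deg[OF c] funpow_cin_pos[OF c] by simp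
  have "(face opp nxt ((nxt ^^ 1) c), face opp nxt ((nxt ^^ m) c)) \<in> dual_adj\<^sup>*"
    using dual_adj_rotation[where a=1 and b="cin_pos c", OF C_H[OF c] ne] m by simp
  moreover have "face opp nxt ((nxt ^^ 1) c) \<in> right_faces"
    using face_Crev_right[OF opp_C[OF c]] face_nxt[OF C_H[OF c]] by simp
  ultimately show ?thesis using right_faces_closed by blast
qed

lemma corner_left_faces: assumes c: "c \<in> C" and m: "cin_pos c < m" "m \<le> deg c"
  shows "face opp nxt ((nxt ^^ m) c) \<in> left_faces"
proof -
  have ne: "(nxt ^^ t) c \<notin> Cedge" if "Suc (cin_pos c) \<le> t" "t < deg c" for t
    using funpow_notin_Cedge[OF c] that cin_pos_gt_0[OF c] cin_pos_lt_deg[OF c] funpow_cin_pos[OF c] by simp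
  have "(face opp nxt ((nxt ^^ Suc (cin_pos c)) c), face opp nxt ((nxt ^^ m) c)) \<in> dual_adj\<^sup>*"
    using dual_adj_rotation[where a="Suc (cin_pos c)" and b="deg c", OF C_H[OF c] ne] m by simp
  moreover have "face opp nxt ((nxt ^^ Suc (cin_pos c)) c) \<in> left_faces"
  proof -
    have "(nxt ^^ Suc (cin_pos c)) c = nxt (cin c)" using funpow_cin_pos[OF c] by simp
    moreover have "face opp nxt (nxt (cin c)) = face opp nxt (cprev c)"
      using face_nxt[OF Crev_H[OF cin_Crev[OF c]]] C_H[OF cprev_in[OF c]] unfolding cin_def by simp
    ultimately show ?thesis using face_C_left[OF cprev_in[OF c]] by simp
  qed
  ultimately show ?thesis using left_faces_closed by blast
qed

lemma right_faces_connected: "c \<in> C \<Longrightarrow> (face opp nxt (cin c0), face opp nxt (cin c)) \<in> dual_adj\<^sup>*"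
proof -
  have step: "(face opp nxt (cin (cnext c)), face opp nxt (cin c)) \<in> dual_adj\<^sup>*" if c: "c \<in> C" for c
  proof -
    have ne: "(nxt ^^ t) c \<notin> Cedge" if "1 \<le> t" "t < cin_pos c" for t
      using funpow_notin_Cedge[OF c] that cin_pos_gt_0[OF c] cin_pos_lt_deg[OF c] funpow_cin_pos[OF c] by simp
    have "(face opp nxt ((nxt ^^ 1) c), face opp nxt ((nxt ^^ cin_pos c) c)) \<in> dual_adj\<^sup>*"
      using dual_adj_rotation[where a=1 and b="cin_pos c" and m="cin_pos c", OF C_H[OF c] ne] cin_pos_gt_0[OF c] by simp
    moreover have "face opp nxt ((nxt ^^ 1) c) = face opp nxt (cin (cnext c))"
      using face_nxt[OF C_H[OF c]] cin_cnext[OF c] by simp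
    ultimately show ?thesis using funpow_cin_pos[OF c] by simp
  qed
  have "(face opp nxt (cin c0), face opp nxt (cin ((cnext ^^ k) c0))) \<in> dual_adj\<^sup>*" for k
  proof (induct k)
    case (Suc k)
    have ck: "(cnext ^^ k) c0 \<in> C" using cnext_perm.funpow_in[OF c0_in] .
    have "(face opp nxt (cin ((cnext ^^ k) c0)), face opp nxt (cin (cnext ((cnext ^^ k) c0)))) \<in> dual_adj\<^sup>*"
      using dual_adj_rtrancl_sym[OF step[OF ck]] .
    then show ?case using rtrancl_trans[OF Suc] by simp
  qed simp
  moreover assume "c \<in> C"
  then obtain k where "c = (cnext ^^ k) c0" using C_cycle unfolding cycle_of_def by blast
  ultimately show ?thesis by simp
qed

lemma left_faces_connected: "c \<in> C \<Longrightarrow> (face opp nxt c0, face opp nxt c) \<in> dual_adj\<^sup>*"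
proof -
  have step: "(face opp nxt (cprev c), face opp nxt c) \<in> dual_adj\<^sup>*" if c: "c \<in> C" for c
  proof -
    have ne: "(nxt ^^ t) c \<notin> Cedge" if "Suc (cin_pos c) \<le> t" "t < deg c" for t
      using funpow_notin_Cedge[OF c] that cin_pos_gt_0[OF c] cin_pos_lt_deg[OF c] funpow_cin_pos[OF c] by simp
    have "(face opp nxt ((nxt ^^ Suc (cin_pos c)) c), face opp nxt ((nxt ^^ deg c) c)) \<in> dual_adj\<^sup>*"
      using dual_adj_rotation[where a="Suc (cin_pos c)" and b="deg c" and m="deg c", OF C_H[OF c] ne] cin_pos_lt_deg[OF c] by simp
    moreover have "(nxt ^^ Suc (cin_pos c)) c = nxt (cin c)" using funpow_cin_pos[OF c] by simp
    moreover have "face opp nxt (nxt (cin c)) = face opp nxt (cprev c)"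
      using face_nxt[OF Crev_H[OF cin_Crev[OF c]]] C_H[OF cprev_in[OF c]] unfolding cin_def by simp
    ultimately show ?thesis using funpow_deg[OF C_H[OF c]] by simp
  qed
  have "(face opp nxt c0, face opp nxt ((cnext ^^ k) c0)) \<in> dual_adj\<^sup>*" for k
  proof (induct k)
    case (Suc k)
    have ck: "(cnext ^^ k) c0 \<in> C" using cnext_perm.funpow_in[OF c0_in] .
    have "(face opp nxt ((cnext ^^ k) c0), face opp nxt (cnext ((cnext ^^ k) c0))) \<in> dual_adj\<^sup>*"
      using step[OF cnext_in[OF ck]] cprev_cnext[OF ck] by simp
    then show ?case using rtrancl_trans[OF Suc] by simp
  qed simp
  moreover assume "c \<in> C"
  then obtain k where "c = (cnext ^^ k) c0" using C_cycle unfolding cycle_of_def by blast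
  ultimately show ?thesis by simp
qed

lemma left_faces_iff: "f \<in> left_faces \<longleftrightarrow> (face opp nxt c0, f) \<in> dual_adj\<^sup>*"
proof
  assume "f \<in> left_faces"
  then obtain c where c: "c \<in> C" "(face opp nxt c, f) \<in> dual_adj\<^sup>*" unfolding left_faces_def by blast
  show "(face opp nxt c0, f) \<in> dual_adj\<^sup>*" using rtrancl_trans[OF left_faces_connected[OF c(1)] c(2)] .
next
  assume "(face opp nxt c0, f) \<in> dual_adj\<^sup>*"
  then show "f \<in> left_faces" unfolding left_faces_def using c0_in by blast
qed

lemma right_faces_iff: "f \<in> right_faces \<longleftrightarrow> (face opp nxt (cin c0), f) \<in> dual_adj\<^sup>*"
proof
  assume "f \<in> right_faces"
  then obtain x where x: "x \<in> Crev" "(face opp nxt x, f) \<in> dual_adj\<^sup>*" unfolding right_faces_def by blast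
  obtain c where c: "c \<in> C" "x = cin c" using Crev_cin[OF x(1)] by blast
  show "(face opp nxt (cin c0), f) \<in> dual_adj\<^sup>*" using rtrancl_trans[OF right_faces_connected[OF c(1)]] x(2) c(2) by simp
next
  assume "(face opp nxt (cin c0), f) \<in> dual_adj\<^sup>*"
  then show "f \<in> right_faces" unfolding right_faces_def using cin_Crev[OF c0_in] by blast
qed

lemma face_reaches_cycle_dart_side:
  assumes h: "h \<in> H" and c: "c \<in> C"
  shows "(face opp nxt h, face opp nxt c) \<in> dual_adj\<^sup>* \<or> (face opp nxt h, face opp nxt (opp c)) \<in> dual_adj\<^sup>*"
  using faces_left_or_right[OF h]
proof
  assume "face opp nxt h \<in> right_faces"
  moreover have "face opp nxt (opp c) \<in> right_faces" using face_Crev_right[OF opp_C[OF c]] .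
  ultimately show ?thesis unfolding right_faces_iff using dual_adj_rtrancl_sym rtrancl_trans by metis
next
  assume "face opp nxt h \<in> left_faces"
  moreover have "face opp nxt c \<in> left_faces" using face_C_left[OF c] .
  ultimately show ?thesis unfolding left_faces_iff using dual_adj_rtrancl_sym rtrancl_trans by metis
qed

lemma dual_adj_off_cycle_vertex:
  assumes h: "h \<in> H" and nc: "tail nxt h \<notin> tail nxt ` C"
  shows "\<And>g. g \<in> tail nxt h \<Longrightarrow> g \<notin> Cedge \<and> (face opp nxt h, face opp nxt g) \<in> dual_adj\<^sup>*"
proof -
  have ne: "(nxt ^^ t) h \<notin> Cedge" for t
  proof
    assume e: "(nxt ^^ t) h \<in> Cedge"
    obtain c where c: "c \<in> C" "tail nxt ((nxt ^^ t) h) = tail nxt c" using Cedge_tail[OF e] by blast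
    have "tail nxt ((nxt ^^ t) h) = tail nxt h" using tail_eqI[OF h funpow_in_tail] .
    then show False using nc c by (metis image_eqI)
  qed
  fix g assume g: "g \<in> tail nxt h"
  obtain k where k: "k < deg h" "(nxt ^^ k) h = g" using ex_funpow_in_tail[OF h g] by blast
  have "(face opp nxt ((nxt ^^ 0) h), face opp nxt ((nxt ^^ k) h)) \<in> dual_adj\<^sup>*"
    using dual_adj_rotation[OF h, of 0 k k] ne by simp
  then show "g \<notin> Cedge \<and> (face opp nxt h, face opp nxt g) \<in> dual_adj\<^sup>*" using k ne by auto
qed

lemma dual_adj_faces: "(f, g) \<in> dual_adj\<^sup>* \<Longrightarrow> f \<in> faces H opp nxt \<Longrightarrow> g \<in> faces H opp nxt"
proof (induct rule: rtrancl_induct)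
  case (step y z) then show ?case unfolding dual_adj_def faces_def using opp_in by blast
qed simp

end

lemma cyclic_closed_Suc_mod_all:
  fixes d t j :: nat
  assumes d: "0 < d" and step: "\<And>s. s < d \<Longrightarrow> Q s \<Longrightarrow> Q (Suc s mod d)" and t: "t < d" "Q t"
    and j: "j < d"
  shows "Q j"
proof -
  have up: "Q a \<Longrightarrow> a < d \<Longrightarrow> a + n < d \<Longrightarrow> Q (a + n)" for a n :: nat
  proof (induct n)
    case (Suc n)
    then have "Q (Suc (a + n) mod d)" using step[of "a + n"] by simp
    then show ?case using Suc by simp
  qed simp
  have "Q (d - 1)" using up[OF t(2) t(1), of "d - 1 - t"] t d by simp
  then have "Q (Suc (d - 1) mod d)" using step[of "d - 1"] d by simp
  then have "Q 0" using d by simp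
  then show "Q j" using up[OF _ d, of j] j by simp
qed

lemma cyclic_closed_pred_mod_all:
  fixes d t j :: nat
  assumes d: "0 < d" and step: "\<And>s. s < d \<Longrightarrow> Q s \<Longrightarrow> Q ((s + d - 1) mod d)" and t: "t < d" "Q t"
    and j: "j < d"
  shows "Q j"
proof -
  have down: "Q a \<Longrightarrow> a < d \<Longrightarrow> n \<le> a \<Longrightarrow> Q (a - n)" for a n :: nat
  proof (induct n)
    case (Suc n)
    then have q: "Q (a - n)" by simp
    have "a - n < d" "0 < a - n" using Suc by auto
    then have "(a - n + d - 1) mod d = a - Suc n" by (simp add: mod_if)
    then show ?case using step[of "a - n"] q \<open>a - n < d\<close> by simp
  qed simp
  have "Q 0" using down[OF t(2) t(1), of t] by simp
  then have "Q ((0 + d - 1) mod d)" using step[of 0] d by simp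
  then have "Q (d - 1)" using d by simp
  then show "Q j" using down[of "d - 1" "d - 1 - j"] d j by simp
qed

lemma sum_rotate_mod:
  fixes t d :: nat and g :: "nat \<Rightarrow> 'b :: comm_monoid_add"
  assumes t: "t < d"
  shows "(\<Sum>s<d. g ((t + s) mod d)) = (\<Sum>j<d. g j)"
proof -
  have im: "(\<lambda>s. (t + s) mod d) ` {..<d} = {..<d}"
  proof
    show "(\<lambda>s. (t + s) mod d) ` {..<d} \<subseteq> {..<d}" using t by auto
    show "{..<d} \<subseteq> (\<lambda>s. (t + s) mod d) ` {..<d}"
    proof
      fix j assume j: "j \<in> {..<d}"
      have "(t + (j + d - t) mod d) mod d = (t + (j + d - t)) mod d" by (simp add: mod_add_right_eq)
      also have "t + (j + d - t) = j + d" using t by simp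
      also have "(j + d) mod d = j" using j by simp
      finally show "j \<in> (\<lambda>s. (t + s) mod d) ` {..<d}" using t by (intro image_eqI[of _ _ "(j + d - t) mod d"]) auto
    qed
  qed
  then have "card ((\<lambda>s. (t + s) mod d) ` {..<d}) = card {..<d}" by simp
  then have "inj_on (\<lambda>s. (t + s) mod d) {..<d}" using inj_on_iff_eq_card[of "{..<d}"] by blast
  with im have "bij_betw (\<lambda>s. (t + s) mod d) {..<d} {..<d}" unfolding bij_betw_def by blast
  then show ?thesis by (rule sum.reindex_bij_betw)
qed

locale wood =
  fixes d :: nat and H :: "'a set" and opp nxt :: "'a \<Rightarrow> 'a" and ou :: "nat \<Rightarrow> 'a" and W :: "nat \<Rightarrow> 'a set"
  assumes dmap: "d_map d H opp nxt ou" and w0: "W0 d H opp nxt ou W"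
    and w1: "W1 d H opp nxt ou W" and w2: "W2 d H opp nxt ou W"
begin

sublocale plane_map_setting H opp nxt using dmap unfolding d_map_def by unfold_locales blast

lemma d_ge_3: "3 \<le> d" using dmap unfolding d_map_def by blast
lemma ou_H: "k < d \<Longrightarrow> ou k \<in> H" using dmap unfolding d_map_def by blast
lemma ou_phi: "k < d \<Longrightarrow> phi opp nxt (ou k) = ou (Suc k mod d)" using dmap unfolding d_map_def by blast
lemma inj_on_vt: "inj_on (\<lambda>k. tail nxt (ou k)) {..<d}" using dmap unfolding d_map_def by blast

abbreviation vt :: "nat \<Rightarrow> 'a set" where "vt k \<equiv> tail nxt (ou k)"

abbreviation outer_face :: "'a set" where "outer_face \<equiv> face opp nxt (ou 0)"

lemma outer_vertex_eq_vt: "outer_vertex nxt ou k = vt k" unfolding outer_vertex_def ..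

lemma W_subset: "i < d \<Longrightarrow> W i \<subseteq> H" using w0 unfolding W0_def by blast
lemma W_card: "i < d \<Longrightarrow> u \<in> vertices H nxt \<Longrightarrow> u \<noteq> vt i \<Longrightarrow> card {h \<in> W i. tail nxt h = u} = 1"
  using w0 unfolding W0_def outer_vertex_eq_vt by blast
lemma W_tail_neq_root: "i < d \<Longrightarrow> h \<in> W i \<Longrightarrow> tail nxt h \<noteq> vt i"
  using w0 unfolding W0_def outer_vertex_eq_vt by blast
lemma outer_arc_in_W: "i < d \<Longrightarrow> k < d \<Longrightarrow> k \<noteq> i \<Longrightarrow> ou k \<in> W i"
  using w0 unfolding W0_def by blast

abbreviation out :: "nat \<Rightarrow> 'a set \<Rightarrow> 'a" where "out i u \<equiv> outarc nxt W i u"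

lemma
  assumes i: "i < d" and u: "u \<in> vertices H nxt" "u \<noteq> vt i"
  shows out_in_W: "out i u \<in> W i" and tail_out: "tail nxt (out i u) = u"
    and out_eqI: "h \<in> W i \<Longrightarrow> tail nxt h = u \<Longrightarrow> h = out i u"
proof -
  obtain a where a: "{h \<in> W i. tail nxt h = u} = {a}" using W_card[OF i u] card_1_singletonE by blast
  have "out i u = a" unfolding outarc_def using a by (intro the_equality) blast+
  then show "out i u \<in> W i" "tail nxt (out i u) = u" "h \<in> W i \<Longrightarrow> tail nxt h = u \<Longrightarrow> h = out i u"
    using a by blast+
qed

lemma out_H: "i < d \<Longrightarrow> u \<in> vertices H nxt \<Longrightarrow> u \<noteq> vt i \<Longrightarrow> out i u \<in> H"
  using out_in_W W_subset by blast

definition parent :: "nat \<Rightarrow> 'a set \<Rightarrow> 'a set" where "parent i u = tail nxt (opp (out i u))"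

lemma tail_in_vertices: "h \<in> H \<Longrightarrow> tail nxt h \<in> vertices H nxt" unfolding vertices_def by blast

lemma parent_in_vertices: "i < d \<Longrightarrow> u \<in> vertices H nxt \<Longrightarrow> u \<noteq> vt i \<Longrightarrow> parent i u \<in> vertices H nxt"
  unfolding parent_def using tail_in_vertices opp_in out_H by blast

lemma tail_opp_ou: "k < d \<Longrightarrow> tail nxt (opp (ou k)) = vt (Suc k mod d)"
proof -
  assume k: "k < d"
  have "ou (Suc k mod d) = nxt (opp (ou k))" using ou_phi[OF k] phi_apply by simp
  then have "ou (Suc k mod d) \<in> tail nxt (opp (ou k))" unfolding tail_eq_cycle_of by simp
  from tail_eqI[OF opp_in[OF ou_H[OF k]] this] show ?thesis by simp
qed

lemma vt_in_vertices: "k < d \<Longrightarrow> vt k \<in> vertices H nxt" using tail_in_vertices ou_H by blast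

lemma vt_neq: "k < d \<Longrightarrow> i < d \<Longrightarrow> k \<noteq> i \<Longrightarrow> vt k \<noteq> vt i"
  using inj_on_vt unfolding inj_on_def by blast

lemma out_vt: "i < d \<Longrightarrow> k < d \<Longrightarrow> k \<noteq> i \<Longrightarrow> out i (vt k) = ou k"
  using out_eqI[of i "vt k" "ou k"] outer_arc_in_W vt_in_vertices vt_neq by simp

lemma parent_vt: "i < d \<Longrightarrow> k < d \<Longrightarrow> k \<noteq> i \<Longrightarrow> parent i (vt k) = vt (Suc k mod d)"
  unfolding parent_def using out_vt tail_opp_ou by simp

lemma face_ou_eq: "k < d \<Longrightarrow> face opp nxt (ou k) = outer_face"
proof (induct k)
  case (Suc k)
  then have k: "k < d" by simp
  have "ou (Suc k) = phi opp nxt (ou k)" using ou_phi[OF k] Suc by simp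
  then have "ou (Suc k) \<in> face opp nxt (ou k)" unfolding face_eq_cycle_of by simp
  from face_eqI[OF ou_H[OF k] this] show ?case using Suc k by simp
qed simp

lemma outer_face_in_faces: "outer_face \<in> faces H opp nxt" unfolding faces_def using ou_H d_ge_3 by simp

definition inner_vertex :: "'a set \<Rightarrow> bool" where
  "inner_vertex u \<longleftrightarrow> u \<in> vertices H nxt \<and> (\<forall>k<d. u \<noteq> vt k)"

lemma inner_vertex_in_vertices: "inner_vertex u \<Longrightarrow> u \<in> vertices H nxt" unfolding inner_vertex_def by blast
lemma inner_vertex_neq_vt: "inner_vertex u \<Longrightarrow> k < d \<Longrightarrow> u \<noteq> vt k" unfolding inner_vertex_def by blast

lemma
  assumes u: "inner_vertex u" and i: "i < d"
  shows out_inner_in_W: "out i u \<in> W i" and tail_out_inner: "tail nxt (out i u) = u"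
    and out_inner_H: "out i u \<in> H"
    and out_inner_eqI: "h \<in> W i \<Longrightarrow> tail nxt h = u \<Longrightarrow> h = out i u"
proof -
  note v = i inner_vertex_in_vertices[OF u] inner_vertex_neq_vt[OF u i]
  show "out i u \<in> W i" by (rule out_in_W[OF v])
  show "tail nxt (out i u) = u" by (rule tail_out[OF v])
  show "out i u \<in> H" by (rule out_H[OF v])
  show "h \<in> W i \<Longrightarrow> tail nxt h = u \<Longrightarrow> h = out i u" by (rule out_eqI[OF v])
qed

lemma in_tail_out_inner:
  assumes "inner_vertex u" "i < d" and "tail nxt g = u"
  shows "g \<in> tail nxt (out i u)"
  by (rule tail_mem) (simp only: tail_out_inner[OF assms(1,2)] assms(3))

section \<open>The order of the outgoing arcs around an inner vertex\<close>

definition sector_size :: "nat \<Rightarrow> 'a set \<Rightarrow> nat" where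
  "sector_size i u = (\<Sum>s<d-2. cw_dist nxt (out ((i + 1 + s) mod d) u) (out ((i + 2 + s) mod d) u))"

lemma
  assumes "inner_vertex u"
  shows inner_out_not_all_equal: "\<exists>j<d. out j u \<noteq> out 0 u"
    and sum_cw_dist_out: "(\<Sum>j<d. cw_dist nxt (out j u) (out (Suc j mod d) u)) = card u"
proof -
  have "u \<notin> outer_vertices d nxt ou" using assms unfolding inner_vertex_def outer_vertices_def by blast
  then show "\<exists>j<d. out j u \<noteq> out 0 u" "(\<Sum>j<d. cw_dist nxt (out j u) (out (Suc j mod d) u)) = card u"
    using w1 assms unfolding W1_def inner_vertex_def by blast+
qed

lemma
  assumes "inner_vertex u" "i < d" "h \<in> W i" "tail nxt (opp h) = u"
  shows entering_after_out_Suc: "0 < cw_dist nxt (out (Suc i mod d) u) (opp h)"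
    and entering_in_sector: "cw_dist nxt (out (Suc i mod d) u) (opp h) < sector_size i u"
proof -
  have "u \<notin> outer_vertices d nxt ou" using assms unfolding inner_vertex_def outer_vertices_def by blast
  then show "0 < cw_dist nxt (out (Suc i mod d) u) (opp h)"
    and "cw_dist nxt (out (Suc i mod d) u) (opp h) < sector_size i u"
    using w2 assms unfolding W2_def inner_vertex_def head_def Let_def sector_size_def by blast+
qed

lemma sum_cw_dist_out_rotated:
  assumes u: "inner_vertex u" and i: "i < d"
  shows "cw_dist nxt (out i u) (out (Suc i mod d) u) + sector_size i u
         + cw_dist nxt (out ((i + d - 1) mod d) u) (out i u) = card u"
proof -
  define g where "g j = cw_dist nxt (out j u) (out (Suc j mod d) u)" for j
  have d: "d = Suc (Suc (d - 2))" using d_ge_3 by simp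
  have "card u = (\<Sum>s<d. g ((i + s) mod d))"
    using sum_rotate_mod[OF i, of g] sum_cw_dist_out[OF u] unfolding g_def by simp
  also have "\<dots> = (\<Sum>s<Suc (Suc (d - 2)). g ((i + s) mod d))" using d by simp
  also have "\<dots> = g ((i + 0) mod d) + (\<Sum>s<Suc (d - 2). g ((i + Suc s) mod d))"
    by (rule sum.lessThan_Suc_shift)
  also have "\<dots> = g ((i + 0) mod d) + (\<Sum>s<d-2. g ((i + Suc s) mod d)) + g ((i + Suc (d - 2)) mod d)"
    by simp
  also have "(\<Sum>s<d-2. g ((i + Suc s) mod d)) = sector_size i u"
    unfolding sector_size_def g_def by (intro sum.cong) (simp_all add: mod_Suc_eq add.commute add.left_commute)
  also have "i + Suc (d - 2) = i + d - 1" using d_ge_3 by simp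
  finally have "card u = g ((i + 0) mod d) + sector_size i u + g ((i + d - 1) mod d)" .
  moreover have "Suc ((i + d - 1) mod d) mod d = i"
  proof -
    have "Suc ((i + d - 1) mod d) mod d = Suc (i + d - 1) mod d" by (rule mod_Suc_eq)
    also have "Suc (i + d - 1) = i + d" using d_ge_3 by simp
    finally show ?thesis using i by simp
  qed
  ultimately show ?thesis unfolding g_def using i by simp
qed

lemma funpow_sector_size:
  assumes u: "inner_vertex u" and i: "i < d"
  shows "(nxt ^^ sector_size i u) (out (Suc i mod d) u) = out ((i + d - 1) mod d) u"
proof -
  define b where "b k = out ((i + 1 + k) mod d) u" for k
  have "(nxt ^^ (\<Sum>k<d-2. cw_dist nxt (b k) (b (Suc k)))) (b 0) = b (d - 2)"
  proof (rule funpow_sum_cw_dist)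
    show "out i u \<in> H" by (rule out_inner_H[OF u i])
    show "b k \<in> tail nxt (out i u)" for k
      unfolding b_def using in_tail_out_inner[OF u i] tail_out_inner[OF u] d_ge_3 by simp
  qed
  moreover have "(\<Sum>k<d-2. cw_dist nxt (b k) (b (Suc k))) = sector_size i u"
    unfolding b_def sector_size_def by (intro sum.cong) (simp_all add: add.commute add.left_commute)
  moreover have "b 0 = out (Suc i mod d) u" unfolding b_def by simp
  moreover have "i + 1 + (d - 2) = i + d - 1" using d_ge_3 by simp
  then have "b (d - 2) = out ((i + d - 1) mod d) u" by (simp only: b_def)
  ultimately show ?thesis by simp
qed

lemma cw_dist_out_entering:
  assumes u: "inner_vertex u" and i: "i < d" and h: "h \<in> W i" and hu: "tail nxt (opp h) = u"
  shows "cw_dist nxt (out i u) (opp h)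
         = cw_dist nxt (out i u) (out (Suc i mod d) u) + cw_dist nxt (out (Suc i mod d) u) (opp h)"
proof -
  let ?c = "out i u" and ?p = "out (Suc i mod d) u"
  have p: "Suc i mod d < d" using i by simp
  have deg: "deg ?c = card u" unfolding deg_def using tail_out_inner[OF u i] by simp
  have "(nxt ^^ cw_dist nxt ?c ?p) ?c = ?p"
    using funpow_cw_dist[OF out_inner_H[OF u i] in_tail_out_inner[OF u i tail_out_inner[OF u p]]] .
  moreover have "(nxt ^^ cw_dist nxt ?p (opp h)) ?p = opp h"
    using funpow_cw_dist[OF out_inner_H[OF u p] in_tail_out_inner[OF u p hu]] .
  ultimately have "(nxt ^^ (cw_dist nxt ?c ?p + cw_dist nxt ?p (opp h))) ?c = opp h"
    by (simp add: funpow_add_apply)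
  moreover have "cw_dist nxt ?c ?p + cw_dist nxt ?p (opp h) < deg ?c"
    using sum_cw_dist_out_rotated[OF u i] entering_in_sector[OF u i h hu] deg by linarith
  ultimately show ?thesis
    using funpow_eq_iff_cw_dist[OF out_inner_H[OF u i] in_tail_out_inner[OF u i hu]] by simp
qed

text \<open>
  The next three lemmas say that, going clockwise around an inner vertex \<open>u\<close> from the outgoing
  arc of \<open>W i\<close>, one meets first the outgoing arc of \<open>W (i + 1)\<close>, then any arc of \<open>W i\<close>
  entering \<open>u\<close>, and then the outgoing arc of \<open>W (i - 1)\<close>.
\<close>

lemma cw_dist_out_entering_pos:
  assumes "inner_vertex u" "i < d" "h \<in> W i" "tail nxt (opp h) = u"
  shows "0 < cw_dist nxt (out i u) (opp h)"
  using cw_dist_out_entering[OF assms] entering_after_out_Suc[OF assms] by simp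

lemma out_Suc_before_entering:
  assumes u: "inner_vertex u" and i: "i < d" and "h \<in> W i" "tail nxt (opp h) = u"
  shows "\<exists>m < cw_dist nxt (out i u) (opp h). out (Suc i mod d) u = (nxt ^^ m) (out i u)"
proof -
  have "Suc i mod d < d" using i by simp
  then have "(nxt ^^ cw_dist nxt (out i u) (out (Suc i mod d) u)) (out i u) = out (Suc i mod d) u"
    using funpow_cw_dist[OF out_inner_H[OF u i] in_tail_out_inner[OF u i tail_out_inner[OF u]]] by blast
  then show ?thesis
    using cw_dist_out_entering[OF assms] entering_after_out_Suc[OF assms] by (metis less_add_same_cancel1)
qed

lemma out_pred_after_entering:
  assumes u: "inner_vertex u" and i: "i < d" and h: "h \<in> W i" and hu: "tail nxt (opp h) = u"
  shows "out ((i + d - 1) mod d) u = out i u \<or>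
    (\<exists>m. cw_dist nxt (out i u) (opp h) < m \<and> m < deg (out i u) \<and> out ((i + d - 1) mod d) u = (nxt ^^ m) (out i u))"
proof -
  let ?c = "out i u" and ?p = "out (Suc i mod d) u" and ?q = "out ((i + d - 1) mod d) u"
  have q: "(i + d - 1) mod d < d" using i by simp
  have p: "Suc i mod d < d" using i by simp
  have deg: "deg ?c = card u" unfolding deg_def using tail_out_inner[OF u i] by simp
  show ?thesis
  proof (cases "cw_dist nxt ?q ?c = 0")
    case True
    have "?c = ?q"
      using cw_dist_eq_0[OF out_inner_H[OF u q] in_tail_out_inner[OF u q tail_out_inner[OF u i]] True] .
    then show ?thesis by simp
  next
    case False
    define m where "m = cw_dist nxt ?c ?p + sector_size i u"
    have "(nxt ^^ cw_dist nxt ?c ?p) ?c = ?p"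
      using funpow_cw_dist[OF out_inner_H[OF u i] in_tail_out_inner[OF u i tail_out_inner[OF u p]]] .
    then have "?q = (nxt ^^ m) ?c"
      unfolding m_def using funpow_sector_size[OF u i] by (simp add: funpow_add_apply)
    moreover have "cw_dist nxt ?c (opp h) < m"
      unfolding m_def using cw_dist_out_entering[OF assms] entering_in_sector[OF assms] by simp
    moreover have "m < deg ?c"
      unfolding m_def using sum_cw_dist_out_rotated[OF u i] False deg by linarith
    ultimately show ?thesis by blast
  qed
qed

section \<open>Directed cycles of \<open>W i\<close>\<close>

definition on_W_cycle :: "nat \<Rightarrow> 'a set \<Rightarrow> bool" where
  "on_W_cycle i u \<longleftrightarrow> i < d \<and> u \<in> vertices H nxt \<and> (\<forall>n. (parent i ^^ n) u \<noteq> vt i) \<and> (\<exists>n>0. (parent i ^^ n) u = u)"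

lemma funpow_parent_in_vertices:
  assumes i: "i < d" and u: "u \<in> vertices H nxt" and nr: "\<forall>n. (parent i ^^ n) u \<noteq> vt i"
  shows "(parent i ^^ n) u \<in> vertices H nxt"
proof (induct n)
  case (Suc n) then show ?case using parent_in_vertices[OF i Suc] nr by simp
qed (simp add: u)

definition cycle_vertices :: "nat \<Rightarrow> 'a set \<Rightarrow> 'a set set" where
  "cycle_vertices i u0 = cycle_of (parent i) u0"

context
  fixes i u0 assumes cycle: "on_W_cycle i u0"
begin

lemma on_W_cycle_index: "i < d"
  using cycle unfolding on_W_cycle_def by simp

lemma cycle_vertices_nonroot:
  assumes "y \<in> cycle_vertices i u0"
  shows "y \<in> vertices H nxt" and "y \<noteq> vt i"
proof -
  have u: "u0 \<in> vertices H nxt" and nr: "\<forall>n. (parent i ^^ n) u0 \<noteq> vt i"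
    using cycle unfolding on_W_cycle_def by auto
  obtain n where y: "y = (parent i ^^ n) u0" using assms unfolding cycle_vertices_def cycle_of_def by blast
  show "y \<in> vertices H nxt" unfolding y by (rule funpow_parent_in_vertices[OF on_W_cycle_index u nr])
  show "y \<noteq> vt i" unfolding y using nr by blast
qed

lemma parent_in_cycle_vertices: "y \<in> cycle_vertices i u0 \<Longrightarrow> parent i y \<in> cycle_vertices i u0"
  unfolding cycle_vertices_def by (rule cycle_of_step)

lemma start_in_cycle_vertices: "u0 \<in> cycle_vertices i u0"
  unfolding cycle_vertices_def by simp

lemma finite_perm_parent: "finite_perm (parent i) (cycle_vertices i u0)"
proof -
  obtain n where "0 < n" "(parent i ^^ n) u0 = u0" using cycle unfolding on_W_cycle_def by blast
  then show ?thesis unfolding cycle_vertices_def by (rule finite_perm_cycle_of)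
qed

lemma finite_cycle_vertices: "finite (cycle_vertices i u0)"
  by (rule finite_perm.finite[OF finite_perm_parent])

text \<open>A directed cycle of \<open>W i\<close> through an outer vertex would follow the outer face all the way
  to the root \<open>vt i\<close>.\<close>

lemma cycle_vertices_inner:
  assumes y: "y \<in> cycle_vertices i u0"
  shows "inner_vertex y"
proof -
  have "y \<noteq> vt k" if k: "k < d" for k
  proof
    assume "y = vt k"
    have "vt j \<in> cycle_vertices i u0" if "j < d" for j
    proof (rule cyclic_closed_Suc_mod_all[where Q="\<lambda>j. vt j \<in> cycle_vertices i u0", OF _ _ k _ that])
      show "0 < d" using d_ge_3 by simp
      show "vt k \<in> cycle_vertices i u0" using y \<open>y = vt k\<close> by simp
      fix s assume s: "s < d" "vt s \<in> cycle_vertices i u0"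
      then have "s \<noteq> i" using cycle_vertices_nonroot(2) by blast
      then show "vt (Suc s mod d) \<in> cycle_vertices i u0"
        using parent_vt[OF on_W_cycle_index s(1)] parent_in_cycle_vertices[OF s(2)] by simp
    qed
    then show False using cycle_vertices_nonroot(2) on_W_cycle_index by blast
  qed
  then show ?thesis unfolding inner_vertex_def using cycle_vertices_nonroot[OF y] by simp
qed

end

definition cycle_arcs :: "nat \<Rightarrow> 'a set \<Rightarrow> 'a set" where
  "cycle_arcs i u0 = out i ` cycle_vertices i u0"

definition next_cycle_arc :: "nat \<Rightarrow> 'a \<Rightarrow> 'a" where
  "next_cycle_arc i c = out i (tail nxt (opp c))"

lemma next_cycle_arc_out: "next_cycle_arc i (out i y) = out i (parent i y)"
  unfolding next_cycle_arc_def parent_def ..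

lemma cycle_arcs_subset_cycle_of:
  assumes cycle: "on_W_cycle i u0"
  shows "cycle_arcs i u0 \<subseteq> cycle_of (next_cycle_arc i) (out i u0)"
proof
  fix c assume "c \<in> cycle_arcs i u0"
  then obtain n where c: "c = out i ((parent i ^^ n) u0)"
    unfolding cycle_arcs_def cycle_vertices_def cycle_of_def by blast
  have "(next_cycle_arc i ^^ k) (out i u0) = out i ((parent i ^^ k) u0)" for k
    by (induct k) (simp_all add: next_cycle_arc_out)
  then show "c \<in> cycle_of (next_cycle_arc i) (out i u0)" using c funpow_in_cycle_of by metis
qed

lemma cycle_arcs_disjoint_opp:
  assumes cycle: "on_W_cycle i u0"
  shows "cycle_arcs i u0 \<inter> opp ` cycle_arcs i u0 = {}"
proof (rule ccontr)
  note i = on_W_cycle_index[OF cycle] and inner = cycle_vertices_inner[OF cycle]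
  assume "cycle_arcs i u0 \<inter> opp ` cycle_arcs i u0 \<noteq> {}"
  then obtain y1 y2 where y: "y1 \<in> cycle_vertices i u0" "y2 \<in> cycle_vertices i u0"
    and eq: "out i y1 = opp (out i y2)"
    unfolding cycle_arcs_def by blast
  have "tail nxt (opp (out i y2)) = y1" using eq tail_out_inner[OF inner[OF y(1)] i] by simp
  then have "0 < cw_dist nxt (out i y1) (opp (out i y2))"
    using cw_dist_out_entering_pos[OF inner[OF y(1)] i out_inner_in_W[OF inner[OF y(2)] i]] by blast
  then show False using eq cw_dist_self by simp
qed

lemma simple_cycle_W:
  assumes cycle: "on_W_cycle i u0"
  shows "simple_cycle H opp nxt (cycle_arcs i u0) (next_cycle_arc i) (out i u0)"
proof -
  note i = on_W_cycle_index[OF cycle] and inner = cycle_vertices_inner[OF cycle]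
  interpret U: finite_perm "parent i" "cycle_vertices i u0" by (rule finite_perm_parent[OF cycle])
  show ?thesis
  proof
    show "cycle_arcs i u0 \<subseteq> H" unfolding cycle_arcs_def using out_inner_H[OF inner i] by blast
    show "next_cycle_arc i c \<in> cycle_arcs i u0" if c: "c \<in> cycle_arcs i u0" for c
    proof -
      obtain y where y: "y \<in> cycle_vertices i u0" "c = out i y" using c unfolding cycle_arcs_def by blast
      then show ?thesis
        using next_cycle_arc_out parent_in_cycle_vertices[OF cycle y(1)] unfolding cycle_arcs_def by simp
    qed
    show "tail nxt (next_cycle_arc i c) = tail nxt (opp c)" if c: "c \<in> cycle_arcs i u0" for c
    proof -
      obtain y where y: "y \<in> cycle_vertices i u0" "c = out i y" using c unfolding cycle_arcs_def by blast
      have "parent i y \<in> cycle_vertices i u0" using parent_in_cycle_vertices[OF cycle y(1)] .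
      then show ?thesis using tail_out_inner[OF inner i] next_cycle_arc_out y(2) unfolding parent_def by simp
    qed
    show "inj_on (tail nxt) (cycle_arcs i u0)"
      unfolding cycle_arcs_def inj_on_def using tail_out_inner[OF inner i] by auto
    show "inj_on (next_cycle_arc i) (cycle_arcs i u0)"
    proof (rule inj_onI)
      fix c1 c2 assume "c1 \<in> cycle_arcs i u0" "c2 \<in> cycle_arcs i u0" and e: "next_cycle_arc i c1 = next_cycle_arc i c2"
      then obtain y1 y2 where y: "y1 \<in> cycle_vertices i u0" "c1 = out i y1" "y2 \<in> cycle_vertices i u0" "c2 = out i y2"
        unfolding cycle_arcs_def by blast
      have "out i (parent i y1) = out i (parent i y2)" using e next_cycle_arc_out y by simp
      then have "parent i y1 = parent i y2"
        using tail_out_inner[OF inner[OF parent_in_cycle_vertices[OF cycle y(1)]] i]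
          tail_out_inner[OF inner[OF parent_in_cycle_vertices[OF cycle y(3)]] i] by metis
      then show "c1 = c2" using U.inj y unfolding inj_on_def by blast
    qed
    show "out i u0 \<in> cycle_arcs i u0" unfolding cycle_arcs_def using start_in_cycle_vertices[OF cycle] by blast
  qed (fact cycle_arcs_subset_cycle_of[OF cycle] cycle_arcs_disjoint_opp[OF cycle])+
qed

lemma ex_W_cycle_in_closed_set:
  assumes i: "i < d" and Y: "finite Y" "\<And>y. y \<in> Y \<Longrightarrow> y \<in> vertices H nxt \<and> y \<noteq> vt i"
    and closed: "\<And>z. z \<in> Y \<Longrightarrow> parent i z \<in> Y" and y: "y \<in> Y"
  shows "\<exists>u1\<in>Y. on_W_cycle i u1 \<and> cycle_vertices i u1 \<subseteq> Y"
proof -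
  define s where "s n = (parent i ^^ n) y" for n
  have sY: "s n \<in> Y" for n unfolding s_def by (induct n) (auto simp: y closed)
  have "\<not> inj_on s {0..card Y}"
  proof
    assume "inj_on s {0..card Y}"
    moreover have "s ` {0..card Y} \<subseteq> Y" using sY by auto
    ultimately have "card {0..card Y} \<le> card Y" using card_inj_on_le[OF _ _ Y(1)] by blast
    then show False by simp
  qed
  then obtain a b where ab: "a < b" "s a = s b"
    unfolding inj_on_def by (metis linorder_neqE_nat)
  have shift: "(parent i ^^ n) (s a) = s (a + n)" for n
    unfolding s_def by (rule funpow_add_apply[symmetric])
  have "(parent i ^^ n) (s a) \<noteq> vt i" for n using shift[of n] Y(2)[OF sY[of "a + n"]] by simp
  moreover have "(parent i ^^ (b - a)) (s a) = s a" using shift[of "b - a"] ab by simp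
  ultimately have "on_W_cycle i (s a)"
    unfolding on_W_cycle_def using i Y(2)[OF sY] ab(1) zero_less_diff by blast
  moreover have "cycle_vertices i (s a) \<subseteq> Y"
    unfolding cycle_vertices_def cycle_of_def using shift sY by auto
  ultimately show ?thesis using sY by blast
qed

definition outer_side :: "nat \<Rightarrow> 'a set \<Rightarrow> 'a set set" where
  "outer_side i u0 = {f. (outer_face, f) \<in> (simple_cycle.dual_adj H opp nxt (cycle_arcs i u0))\<^sup>*}"

end

section \<open>No directed cycles\<close>

locale wood_cycle = wood +
  fixes t :: nat and u0 :: "'a set"
  assumes on_cycle: "on_W_cycle t u0"
begin

sublocale cyc: simple_cycle H opp nxt "cycle_arcs t u0" "next_cycle_arc t" "out t u0"
  by (rule simple_cycle_W[OF on_cycle])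

lemma t_less_d: "t < d"
  by (rule on_W_cycle_index[OF on_cycle])

lemma outer_side_subset_faces: "outer_side t u0 \<subseteq> faces H opp nxt"
  unfolding outer_side_def using cyc.dual_adj_faces outer_face_in_faces by blast

lemma finite_outer_side: "finite (outer_side t u0)"
  using finite_subset[OF outer_side_subset_faces finite_faces] .

lemma out_cycle_arc: "u \<in> cycle_vertices t u0 \<Longrightarrow> out t u \<in> cycle_arcs t u0"
  unfolding cycle_arcs_def by blast

lemma tail_Cedge_cycle_vertices: "tail nxt ` cycle_arcs t u0 = cycle_vertices t u0"
  unfolding cycle_arcs_def using tail_out_inner[OF cycle_vertices_inner[OF on_cycle] t_less_d]
  by (auto simp: image_image)

lemma entering_cycle_arc:
  assumes u: "u \<in> cycle_vertices t u0"
  obtains v where "v \<in> cycle_vertices t u0" "cyc.cprev (out t u) = out t v" "tail nxt (opp (out t v)) = u"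
proof -
  have "cyc.cprev (out t u) \<in> cycle_arcs t u0" using cyc.cprev_in[OF out_cycle_arc[OF u]] .
  then obtain v where v: "v \<in> cycle_vertices t u0" "cyc.cprev (out t u) = out t v"
    unfolding cycle_arcs_def by blast
  have "tail nxt (next_cycle_arc t (out t v)) = tail nxt (opp (out t v))"
    using cyc.tail_cnext[OF out_cycle_arc[OF v(1)]] .
  then have "tail nxt (opp (out t v)) = u"
    using cyc.cnext_cprev[OF out_cycle_arc[OF u]] v(2) tail_out_inner[OF cycle_vertices_inner[OF on_cycle u] t_less_d]
    by simp
  then show ?thesis using that v by blast
qed

text \<open>
  Suppose \<open>W s\<close> agrees with \<open>W t\<close> on the cycle. Then the cycle arc entering a cycle vertex \<open>u\<close>
  belongs to \<open>W s\<close>, so by the order of the outgoing arcs around \<open>u\<close>, the outgoing arc of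
  \<open>W (s + 1)\<close> leaves the cycle to its right and that of \<open>W (s - 1)\<close> to its left, unless they
  follow the cycle.
\<close>

lemma out_Suc_leaves_right:
  assumes s: "s < d" and agree: "\<forall>v\<in>cycle_vertices t u0. out s v = out t v" and u: "u \<in> cycle_vertices t u0"
  shows "out (Suc s mod d) u = out t u \<or>
    (out (Suc s mod d) u \<notin> cyc.Cedge \<and> face opp nxt (out (Suc s mod d) u) \<in> cyc.right_faces)"
proof -
  let ?c = "out t u"
  have c: "?c \<in> cycle_arcs t u0" by (rule out_cycle_arc[OF u])
  obtain v where v: "v \<in> cycle_vertices t u0" "cyc.cprev ?c = out t v" "tail nxt (opp (out t v)) = u"
    using entering_cycle_arc[OF u] .
  have inner: "inner_vertex u" by (rule cycle_vertices_inner[OF on_cycle u])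
  have "out t v \<in> W s" using agree v(1) out_inner_in_W[OF cycle_vertices_inner[OF on_cycle v(1)] s] by simp
  then obtain m where m: "m < cw_dist nxt (out s u) (opp (out t v))" "out (Suc s mod d) u = (nxt ^^ m) (out s u)"
    using out_Suc_before_entering[OF inner s _ v(3)] by blast
  have pos: "cyc.cin_pos ?c = cw_dist nxt ?c (opp (out t v))"
    unfolding cyc.cin_pos_def cyc.cin_def v(2) ..
  show ?thesis
  proof (cases "m = 0")
    case True
    then show ?thesis using m agree u by simp
  next
    case False
    have "m < cyc.cin_pos ?c" using m(1) agree u pos by simp
    then have "(nxt ^^ m) ?c \<notin> cyc.Cedge" "face opp nxt ((nxt ^^ m) ?c) \<in> cyc.right_faces"
      using cyc.funpow_notin_Cedge[OF c] cyc.corner_right_faces[OF c] False cyc.cin_pos_lt_deg[OF c] by simp_all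
    then show ?thesis using m agree u by simp
  qed
qed

lemma out_pred_leaves_left:
  assumes s: "s < d" and agree: "\<forall>v\<in>cycle_vertices t u0. out s v = out t v" and u: "u \<in> cycle_vertices t u0"
  shows "out ((s + d - 1) mod d) u = out t u \<or>
    (out ((s + d - 1) mod d) u \<notin> cyc.Cedge \<and> face opp nxt (out ((s + d - 1) mod d) u) \<in> cyc.left_faces)"
proof -
  let ?c = "out t u"
  have c: "?c \<in> cycle_arcs t u0" by (rule out_cycle_arc[OF u])
  obtain v where v: "v \<in> cycle_vertices t u0" "cyc.cprev ?c = out t v" "tail nxt (opp (out t v)) = u"
    using entering_cycle_arc[OF u] .
  have inner: "inner_vertex u" by (rule cycle_vertices_inner[OF on_cycle u])
  have "out t v \<in> W s" using agree v(1) out_inner_in_W[OF cycle_vertices_inner[OF on_cycle v(1)] s] by simp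
  note pred = out_pred_after_entering[OF inner s this v(3)]
  have pos: "cyc.cin_pos ?c = cw_dist nxt ?c (opp (out t v))"
    unfolding cyc.cin_pos_def cyc.cin_def v(2) ..
  have osu: "out s u = ?c" using agree u by simp
  show ?thesis
  proof (cases "out ((s + d - 1) mod d) u = out s u")
    case True
    then show ?thesis using osu by simp
  next
    case False
    then obtain m where m: "cyc.cin_pos ?c < m" "m < deg ?c" "out ((s + d - 1) mod d) u = (nxt ^^ m) ?c"
      using pred osu pos by auto
    then have "(nxt ^^ m) ?c \<notin> cyc.Cedge" "face opp nxt ((nxt ^^ m) ?c) \<in> cyc.left_faces"
      using cyc.funpow_notin_Cedge[OF c] cyc.corner_left_faces[OF c] cyc.cin_pos_gt_0[OF c] by simp_all
    then show ?thesis using m by simp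
  qed
qed

end

text \<open>
  The descent step. \<open>In\<close> is the side of the cycle of \<open>W t\<close> through \<open>u0\<close> that does not contain
  the outer face, and the outgoing arcs of \<open>W s\<close> at the cycle either follow the cycle or enter \<open>In\<close>.
  Following \<open>W s\<close> from the cycle one cannot leave \<open>In\<close>, so there is a cycle of \<open>W s\<close> inside the
  closed region bounded by the cycle of \<open>W t\<close>; it differs from that cycle, so strictly more faces
  are reachable from the outer face without crossing it.
\<close>

locale wood_side = wood_cycle +
  fixes s :: nat and In :: "'a set set"
  assumes s_less_d: "s < d"
    and outer_face_notin: "outer_face \<notin> In"
    and In_closed: "(f, g) \<in> cyc.dual_adj \<Longrightarrow> f \<in> In \<Longrightarrow> g \<in> In"
    and out_s_cases: "u \<in> cycle_vertices t u0 \<Longrightarrow>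
      out s u = out t u \<or> (out s u \<notin> cyc.Cedge \<and> face opp nxt (out s u) \<in> In)"
    and out_s_differs: "\<exists>u\<in>cycle_vertices t u0. out s u \<noteq> out t u"
begin

lemma In_closed_rtrancl:
  assumes "(f, g) \<in> cyc.dual_adj\<^sup>*"
  shows "f \<in> In \<longleftrightarrow> g \<in> In"
  using assms
proof (induct rule: rtrancl_induct)
  case (step g h)
  then show ?case using In_closed cyc.dual_adj_sym by blast
qed simp

lemma opp_face_In:
  assumes "h \<in> H" "h \<notin> cyc.Cedge" "face opp nxt h \<in> In"
  shows "face opp nxt (opp h) \<in> In"
  using In_closed[OF cyc.dual_adjI[OF assms(1,2)] assms(3)] .

definition region :: "'a set set" where
  "region = cycle_vertices t u0 \<union> {w \<in> vertices H nxt. w \<notin> cycle_vertices t u0 \<and> (\<forall>g\<in>w. face opp nxt g \<in> In)}"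

lemma finite_region: "finite region"
  unfolding region_def using finite_cycle_vertices[OF on_cycle] finite_vertices by simp

lemma region_inner:
  assumes y: "y \<in> region"
  shows "inner_vertex y"
proof (cases "y \<in> cycle_vertices t u0")
  case True
  then show ?thesis by (rule cycle_vertices_inner[OF on_cycle])
next
  case False
  have "y \<noteq> vt k" if k: "k < d" for k
  proof
    assume "y = vt k"
    then have "ou k \<in> y" using tail_mem[of "ou k" "ou k"] by simp
    then have "face opp nxt (ou k) \<in> In" using y False unfolding region_def by blast
    then show False using face_ou_eq[OF k] outer_face_notin by simp
  qed
  moreover have "y \<in> vertices H nxt" using y False unfolding region_def by blast
  ultimately show ?thesis unfolding inner_vertex_def by blast
qed

lemma region_out_cases:
  assumes y: "y \<in> region"
  shows "(y \<in> cycle_vertices t u0 \<and> out s y = out t y) \<or>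
    (out s y \<notin> cyc.Cedge \<and> face opp nxt (out s y) \<in> In)"
proof (cases "y \<in> cycle_vertices t u0")
  case True
  then show ?thesis using out_s_cases by blast
next
  case False
  let ?h = "out s y"
  have h: "tail nxt ?h = y" "?h \<in> H" using tail_out_inner out_inner_H region_inner[OF y] s_less_d by auto
  then have "?h \<in> y" using tail_mem[of ?h ?h] by simp
  then have "face opp nxt ?h \<in> In" using y False unfolding region_def by blast
  moreover have "tail nxt ?h \<notin> tail nxt ` cycle_arcs t u0"
    using tail_Cedge_cycle_vertices h(1) False by simp
  then have "?h \<notin> cyc.Cedge" using cyc.dual_adj_off_cycle_vertex[OF h(2)] tail_mem by blast
  ultimately show ?thesis by blast
qed

lemma parent_in_region:
  assumes y: "y \<in> region"
  shows "parent s y \<in> region"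
  using region_out_cases[OF y]
proof
  assume "y \<in> cycle_vertices t u0 \<and> out s y = out t y"
  then show ?thesis using parent_in_cycle_vertices[OF on_cycle] unfolding region_def parent_def by auto
next
  assume exits: "out s y \<notin> cyc.Cedge \<and> face opp nxt (out s y) \<in> In"
  let ?h = "out s y"
  have h: "?h \<in> H" using out_inner_H[OF region_inner[OF y] s_less_d] .
  have oh: "opp ?h \<in> H" "opp ?h \<notin> cyc.Cedge" using opp_in[OF h] cyc.opp_in_Cedge_iff[OF h] exits by auto
  have In: "face opp nxt (opp ?h) \<in> In" using opp_face_In[OF h] exits by blast
  show ?thesis
  proof (cases "parent s y \<in> cycle_vertices t u0")
    case False
    then have off: "tail nxt (opp ?h) \<notin> tail nxt ` cycle_arcs t u0"
      using tail_Cedge_cycle_vertices unfolding parent_def by simp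
    have "face opp nxt g \<in> In" if "g \<in> parent s y" for g
      using that cyc.dual_adj_off_cycle_vertex[OF oh(1) off] In_closed_rtrancl In unfolding parent_def by blast
    then show ?thesis using False tail_in_vertices[OF oh(1)] unfolding region_def parent_def by blast
  qed (simp add: region_def)
qed

lemma ex_W_cycle_in_region: "\<exists>u1. on_W_cycle s u1 \<and> cycle_vertices s u1 \<subseteq> region"
proof -
  have u0: "u0 \<in> region" unfolding region_def using start_in_cycle_vertices[OF on_cycle] by blast
  have nonroot: "y \<in> vertices H nxt \<and> y \<noteq> vt s" if "y \<in> region" for y
    using region_inner[OF that] s_less_d unfolding inner_vertex_def by blast
  obtain u1 where "u1 \<in> region" "on_W_cycle s u1" "cycle_vertices s u1 \<subseteq> region"
    using ex_W_cycle_in_closed_set[OF s_less_d finite_region nonroot parent_in_region u0] by blast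
  then show ?thesis by blast
qed

context
  fixes u1 assumes new: "on_W_cycle s u1" "cycle_vertices s u1 \<subseteq> region"
begin

interpretation new: simple_cycle H opp nxt "cycle_arcs s u1" "next_cycle_arc s" "out s u1"
  by (rule simple_cycle_W[OF new(1)])

lemma new_cycle_enters_In:
  "\<exists>y\<in>cycle_vertices s u1. out s y \<notin> cyc.Cedge \<and> face opp nxt (out s y) \<in> In"
proof (rule ccontr)
  assume none: "\<not> ?thesis"
  have follows: "y \<in> cycle_vertices t u0 \<and> out s y = out t y" if "y \<in> cycle_vertices s u1" for y
  proof -
    have "y \<in> region" using new(2) that by blast
    from region_out_cases[OF this] show ?thesis
    proof
      assume "out s y \<notin> cyc.Cedge \<and> face opp nxt (out s y) \<in> In"
      with none that show ?thesis by blast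
    qed
  qed
  interpret old: finite_perm "parent t" "cycle_vertices t u0" by (rule finite_perm_parent[OF on_cycle])
  have u1: "u1 \<in> cycle_vertices t u0" using follows[OF start_in_cycle_vertices[OF new(1)]] by (rule conjunct1)
  have "cycle_of (parent t) u1 \<subseteq> cycle_vertices s u1"
  proof (rule cycle_of_least)
    fix y assume y: "y \<in> cycle_vertices s u1"
    then have "parent t y = parent s y" using follows[OF y] unfolding parent_def by simp
    then show "parent t y \<in> cycle_vertices s u1" using parent_in_cycle_vertices[OF new(1) y] by simp
  qed (rule start_in_cycle_vertices[OF new(1)])
  moreover have "cycle_of (parent t) u1 = cycle_vertices t u0"
    using old.cycle_of_eq[OF start_in_cycle_vertices[OF on_cycle] u1[unfolded cycle_vertices_def]]
    unfolding cycle_vertices_def .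
  ultimately have sub: "cycle_vertices t u0 \<subseteq> cycle_vertices s u1" by simp
  obtain u where "u \<in> cycle_vertices t u0" "out s u \<noteq> out t u" using out_s_differs by blast
  with follows[OF subsetD[OF sub]] show False by blast
qed

lemma outer_side_subset:
  assumes "f \<in> outer_side t u0"
  shows "f \<in> outer_side s u1" and "f \<notin> In"
proof -
  have "(outer_face, f) \<in> new.dual_adj\<^sup>* \<and> f \<notin> In"
    using assms unfolding outer_side_def mem_Collect_eq
  proof (induct rule: rtrancl_induct)
    case (step f1 f2)
    from step(2) obtain h where h: "h \<in> H" "h \<notin> cyc.Cedge" "f1 = face opp nxt h" "f2 = face opp nxt (opp h)"
      unfolding cyc.dual_adj_def by blast
    have f2: "f2 \<notin> In" using In_closed_rtrancl[of f1 f2] step by blast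
    have "h \<notin> new.Cedge"
    proof
      assume "h \<in> new.Cedge"
      then obtain y where y: "y \<in> cycle_vertices s u1" "h = out s y \<or> h = opp (out s y)"
        unfolding new.Cedge_def new.Crev_def unfolding cycle_arcs_def by blast
      have "y \<in> region" using new(2) y(1) by blast
      from region_out_cases[OF this] show False
      proof
        assume "y \<in> cycle_vertices t u0 \<and> out s y = out t y"
        then show False using y(2) h(2) out_cycle_arc unfolding cyc.Cedge_def cyc.Crev_def by auto
      next
        assume "out s y \<notin> cyc.Cedge \<and> face opp nxt (out s y) \<in> In"
        then show False
          using y(2) step(3) h(3) opp_face_In[OF out_inner_H[OF region_inner[OF \<open>y \<in> region\<close>] s_less_d]] by auto
      qed
    qed
    then have "(f1, f2) \<in> new.dual_adj" using h new.dual_adjI by simp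
    then show ?case using step(3) f2 by (meson rtrancl.rtrancl_into_rtrancl)
  qed (use outer_face_notin in simp)
  then show "f \<in> outer_side s u1" "f \<notin> In" unfolding outer_side_def by simp_all
qed

lemma outer_side_meets_In: "\<exists>f\<in>outer_side s u1. f \<in> In"
proof -
  obtain y where y: "y \<in> cycle_vertices s u1" "out s y \<notin> cyc.Cedge" "face opp nxt (out s y) \<in> In"
    using new_cycle_enters_In by blast
  have g: "out s y \<in> cycle_arcs s u1" unfolding cycle_arcs_def using y(1) by blast
  have opp_In: "face opp nxt (opp (out s y)) \<in> In" using opp_face_In[OF new.C_H[OF g]] y(2,3) by blast
  have "0 < d" using d_ge_3 by simp
  from new.face_reaches_cycle_dart_side[OF ou_H[OF this] g]
  show ?thesis using y(3) opp_In unfolding outer_side_def by blast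
qed

end

theorem larger_outer_side: "\<exists>u1. on_W_cycle s u1 \<and> card (outer_side t u0) < card (outer_side s u1)"
proof -
  obtain u1 where u1: "on_W_cycle s u1" "cycle_vertices s u1 \<subseteq> region"
    using ex_W_cycle_in_region by blast
  interpret new: wood_cycle d H opp nxt ou W s u1 by unfold_locales (fact u1(1))
  have "outer_side t u0 \<subset> outer_side s u1"
    using outer_side_subset[OF u1] outer_side_meets_In[OF u1] by blast
  then show ?thesis using u1(1) new.finite_outer_side psubset_card_mono by blast
qed

end

context wood_cycle
begin

lemma outer_side_grows:
  "\<exists>s u1. on_W_cycle s u1 \<and> card (outer_side t u0) < card (outer_side s u1)"
proof -
  define agrees where "agrees s \<longleftrightarrow> (\<forall>v\<in>cycle_vertices t u0. out s v = out t v)" for s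
  have u0: "inner_vertex u0"
    using cycle_vertices_inner[OF on_cycle start_in_cycle_vertices[OF on_cycle]] .
  have not_all: "\<not> (\<forall>j<d. agrees j)"
  proof
    assume "\<forall>j<d. agrees j"
    then have "out j u0 = out 0 u0" if "j < d" for j
      using that d_ge_3 start_in_cycle_vertices[OF on_cycle] unfolding agrees_def by simp
    then show False using inner_out_not_all_equal[OF u0] by blast
  qed
  have "agrees t" unfolding agrees_def by simp
  have outer: "outer_face \<in> cyc.right_faces \<union> cyc.left_faces" using cyc.faces_left_or_right[OF ou_H] d_ge_3 by simp
  show ?thesis
  proof (cases "outer_face \<in> cyc.left_faces")
    case True
    obtain s where s: "s < d" "agrees s" "\<not> agrees (Suc s mod d)"
    proof (rule ccontr)
      assume "\<not> thesis"
      then have "\<And>s. s < d \<Longrightarrow> agrees s \<Longrightarrow> agrees (Suc s mod d)" using that by blast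
      then have "agrees j" if "j < d" for j
        using cyclic_closed_Suc_mod_all[of d agrees, OF _ _ t_less_d \<open>agrees t\<close> that] d_ge_3 by simp
      then show False using not_all by blast
    qed
    interpret wood_side d H opp nxt ou W t u0 "Suc s mod d" cyc.right_faces
    proof
      show "Suc s mod d < d" using s(1) by simp
      show "outer_face \<notin> cyc.right_faces" using True cyc.left_right_faces_disjoint by blast
      show "g \<in> cyc.right_faces" if "(f, g) \<in> cyc.dual_adj" "f \<in> cyc.right_faces" for f g
        using cyc.right_faces_closed[OF that(2) r_into_rtrancl[OF that(1)]] .
      show "out (Suc s mod d) u = out t u \<or>
        (out (Suc s mod d) u \<notin> cyc.Cedge \<and> face opp nxt (out (Suc s mod d) u) \<in> cyc.right_faces)"
        if "u \<in> cycle_vertices t u0" for u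
        using out_Suc_leaves_right[OF s(1) s(2)[unfolded agrees_def] that] .
      show "\<exists>u\<in>cycle_vertices t u0. out (Suc s mod d) u \<noteq> out t u" using s(3) unfolding agrees_def by blast
    qed
    show ?thesis using larger_outer_side by blast
  next
    case False
    obtain s where s: "s < d" "agrees s" "\<not> agrees ((s + d - 1) mod d)"
    proof (rule ccontr)
      assume "\<not> thesis"
      then have "\<And>s. s < d \<Longrightarrow> agrees s \<Longrightarrow> agrees ((s + d - 1) mod d)" using that by blast
      then have "agrees j" if "j < d" for j
        using cyclic_closed_pred_mod_all[of d agrees, OF _ _ t_less_d \<open>agrees t\<close> that] d_ge_3 by simp
      then show False using not_all by blast
    qed
    interpret wood_side d H opp nxt ou W t u0 "(s + d - 1) mod d" cyc.left_faces
    proof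
      show "(s + d - 1) mod d < d" using s(1) by simp
      show "outer_face \<notin> cyc.left_faces" by fact
      show "g \<in> cyc.left_faces" if "(f, g) \<in> cyc.dual_adj" "f \<in> cyc.left_faces" for f g
        using cyc.left_faces_closed[OF that(2) r_into_rtrancl[OF that(1)]] .
      show "out ((s + d - 1) mod d) u = out t u \<or>
        (out ((s + d - 1) mod d) u \<notin> cyc.Cedge \<and> face opp nxt (out ((s + d - 1) mod d) u) \<in> cyc.left_faces)"
        if "u \<in> cycle_vertices t u0" for u
        using out_pred_leaves_left[OF s(1) s(2)[unfolded agrees_def] that] .
      show "\<exists>u\<in>cycle_vertices t u0. out ((s + d - 1) mod d) u \<noteq> out t u" using s(3) unfolding agrees_def by blast
    qed
    show ?thesis using larger_outer_side by blast
  qed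
qed

end

context wood
begin

theorem no_W_cycle: "\<not> on_W_cycle t u0"
proof
  assume "on_W_cycle t u0"
  then show False
  proof (induct "card (faces H opp nxt) - card (outer_side t u0)" arbitrary: t u0 rule: less_induct)
    case less
    interpret wood_cycle d H opp nxt ou W t u0 by unfold_locales (fact less.prems)
    obtain s u1 where u1: "on_W_cycle s u1" "card (outer_side t u0) < card (outer_side s u1)"
      using outer_side_grows by blast
    interpret new: wood_cycle d H opp nxt ou W s u1 by unfold_locales (fact u1(1))
    have "card (outer_side s u1) \<le> card (faces H opp nxt)"
      using card_mono[OF finite_faces new.outer_side_subset_faces] .
    then have "card (faces H opp nxt) - card (outer_side s u1) < card (faces H opp nxt) - card (outer_side t u0)"
      using u1(2) by simp
    then show False using less.hyps u1(1) by blast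
  qed
qed

lemma no_closed_set_avoiding_root:
  assumes i: "i < d" and Y: "finite Y" "Y \<subseteq> vertices H nxt" "vt i \<notin> Y"
    and closed: "\<And>z. z \<in> Y \<Longrightarrow> parent i z \<in> Y" and y: "y \<in> Y"
  shows False
proof -
  have "z \<in> vertices H nxt \<and> z \<noteq> vt i" if "z \<in> Y" for z using that Y(2,3) by blast
  then show False using ex_W_cycle_in_closed_set[OF i Y(1) _ closed y] no_W_cycle by blast
qed

lemma parent_reaches_root:
  assumes i: "i < d" and u: "u \<in> vertices H nxt"
  shows "\<exists>n. (parent i ^^ n) u = vt i"
proof (rule ccontr)
  assume "\<not> ?thesis"
  then have nr: "\<forall>n. (parent i ^^ n) u \<noteq> vt i" by blast
  define Y where "Y = {(parent i ^^ n) u | n. True}"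
  have Yv: "Y \<subseteq> vertices H nxt" unfolding Y_def using funpow_parent_in_vertices[OF i u nr] by blast
  have "vt i \<notin> Y" unfolding Y_def using nr by blast
  moreover have "u \<in> Y" unfolding Y_def by (auto intro: exI[of _ 0])
  moreover have "\<And>z. z \<in> Y \<Longrightarrow> parent i z \<in> Y" unfolding Y_def by (auto intro: exI[of _ "Suc n" for n])
  ultimately show False using no_closed_set_avoiding_root[OF i finite_subset[OF Yv finite_vertices] Yv] by blast
qed

lemma parent_dir_rel:
  "i < d \<Longrightarrow> y \<in> vertices H nxt \<Longrightarrow> y \<noteq> vt i \<Longrightarrow> (y, parent i y) \<in> dir_rel opp nxt (W i)"
  unfolding dir_rel_def parent_def head_def using out_in_W tail_out by blast

lemma reaches_root_dir_rel:
  assumes i: "i < d" and u: "u \<in> vertices H nxt"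
  shows "(u, vt i) \<in> (dir_rel opp nxt (W i))\<^sup>*"
proof -
  define m where "m = (LEAST n. (parent i ^^ n) u = vt i)"
  have m: "(parent i ^^ m) u = vt i" unfolding m_def using parent_reaches_root[OF i u] by (rule LeastI_ex)
  have before: "k < m \<Longrightarrow> (parent i ^^ k) u \<noteq> vt i" for k unfolding m_def using not_less_Least by blast
  have "k \<le> m \<Longrightarrow> (u, (parent i ^^ k) u) \<in> (dir_rel opp nxt (W i))\<^sup>* \<and> (parent i ^^ k) u \<in> vertices H nxt" for k
  proof (induct k)
    case (Suc k)
    then have IH: "(u, (parent i ^^ k) u) \<in> (dir_rel opp nxt (W i))\<^sup>*" "(parent i ^^ k) u \<in> vertices H nxt" by auto
    have "(parent i ^^ k) u \<noteq> vt i" using before Suc by simp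
    from parent_dir_rel[OF i IH(2) this] parent_in_vertices[OF i IH(2) this] show ?case
      using IH by (simp add: rtrancl.rtrancl_into_rtrancl)
  qed (simp add: u)
  then show ?thesis using m by (metis order_refl)
qed

lemma no_opposite_arcs:
  assumes i: "i < d" and h: "h \<in> W i" and oh: "opp h \<in> W i"
  shows False
proof -
  have hH: "h \<in> H" using W_subset[OF i] h by blast
  define y where "y = tail nxt h"
  define w where "w = tail nxt (opp h)"
  have y: "y \<in> vertices H nxt" "y \<noteq> vt i" unfolding y_def using tail_in_vertices[OF hH] W_tail_neq_root[OF i h] by auto
  have w: "w \<in> vertices H nxt" "w \<noteq> vt i" unfolding w_def using tail_in_vertices[OF opp_in[OF hH]] W_tail_neq_root[OF i oh] by auto
  have "parent i y = w" unfolding parent_def w_def using out_eqI[OF i y h] y_def by simp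
  moreover have "parent i w = y" unfolding parent_def y_def using out_eqI[OF i w oh] w_def hH by simp
  ultimately show False
    using no_closed_set_avoiding_root[OF i _ _ _ _ insertI1, of w] y w by blast
qed

definition edge_arc :: "nat \<Rightarrow> 'a \<Rightarrow> 'a" where
  "edge_arc i h = (if h \<in> W i then h else opp h)"

lemma W_opp_subset_H: "i < d \<Longrightarrow> W i \<union> opp ` W i \<subseteq> H"
  using W_subset opp_in by blast

lemma edge_arc_in_W:
  assumes i: "i < d" and h: "h \<in> W i \<union> opp ` W i"
  shows "edge_arc i h \<in> W i"
proof (cases "h \<in> W i")
  case False
  then obtain x where "x \<in> W i" "h = opp x" using h by blast
  then show ?thesis unfolding edge_arc_def using False subsetD[OF W_subset[OF i]] by simp
qed (simp add: edge_arc_def)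

lemma edge_arc_edge: "h \<in> H \<Longrightarrow> {edge_arc i h, opp (edge_arc i h)} = {h, opp h}"
  unfolding edge_arc_def by auto

text \<open>Orienting the edges of a cycle of the underlying graph of \<open>W i\<close> as in \<open>W i\<close>, every vertex of
  the cycle is the tail of exactly one of them.\<close>

lemma tails_edge_arc_cycle:
  assumes i: "i < d" and hs: "hs \<noteq> []" "set hs \<subseteq> W i \<union> opp ` W i"
    "distinct (map (\<lambda>h. {h, opp h}) hs)" "distinct (map (tail nxt) hs)"
    "\<forall>j<length hs. head opp nxt (hs ! j) = tail nxt (hs ! (Suc j mod length hs))"
  shows "(\<lambda>j. tail nxt (edge_arc i (hs ! j))) ` {..<length hs} = set (map (tail nxt) hs)"
proof -
  let ?k = "length hs" and ?w = "\<lambda>j. edge_arc i (hs ! j)" and ?T = "set (map (tail nxt) hs)"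
  have in_W: "hs ! j \<in> W i \<union> opp ` W i" if "j < ?k" for j using hs(2) nth_mem[OF that] by blast
  have W: "?w j \<in> W i" if "j < ?k" for j using edge_arc_in_W[OF i in_W[OF that]] .
  have H: "hs ! j \<in> H" if "j < ?k" for j using W_opp_subset_H[OF i] in_W[OF that] by blast
  have sub: "tail nxt (?w j) \<in> ?T" if j: "j < ?k" for j
  proof (cases "hs ! j \<in> W i")
    case True
    then show ?thesis unfolding edge_arc_def using j by auto
  next
    case False
    have "tail nxt (opp (hs ! j)) = tail nxt (hs ! (Suc j mod ?k))" using hs(5) j unfolding head_def by blast
    moreover have "Suc j mod ?k < ?k" using hs(1) by simp
    then have "tail nxt (hs ! (Suc j mod ?k)) \<in> ?T" using nth_mem by simp
    ultimately show ?thesis unfolding edge_arc_def using False by simp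
  qed
  have "inj_on (\<lambda>j. tail nxt (?w j)) {..<?k}"
  proof (rule inj_onI)
    fix j1 j2 assume j: "j1 \<in> {..<?k}" "j2 \<in> {..<?k}" and e: "tail nxt (?w j1) = tail nxt (?w j2)"
    have j1: "j1 < ?k" and j2: "j2 < ?k" using j by auto
    have v: "tail nxt (?w j1) \<in> vertices H nxt" "tail nxt (?w j1) \<noteq> vt i"
      using tail_in_vertices subsetD[OF W_subset[OF i] W[OF j1]] W_tail_neq_root[OF i W[OF j1]] by blast+
    have "?w j1 = out i (tail nxt (?w j1))" using out_eqI[OF i v W[OF j1]] by simp
    moreover have "?w j2 = out i (tail nxt (?w j1))" using out_eqI[OF i v W[OF j2]] e by simp
    ultimately have eq: "?w j1 = ?w j2" by simp
    have "{hs ! j1, opp (hs ! j1)} = {?w j1, opp (?w j1)}" using edge_arc_edge[OF H[OF j1]] by simp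
    also have "\<dots> = {?w j2, opp (?w j2)}" using eq by simp
    also have "\<dots> = {hs ! j2, opp (hs ! j2)}" using edge_arc_edge[OF H[OF j2]] .
    finally have "map (\<lambda>h. {h, opp h}) hs ! j1 = map (\<lambda>h. {h, opp h}) hs ! j2" using j1 j2 by simp
    then show "j1 = j2" using nth_eq_iff_index_eq[OF hs(3)] j1 j2 by simp
  qed
  then have "card ((\<lambda>j. tail nxt (?w j)) ` {..<?k}) = ?k" by (simp add: card_image)
  then have "card ((\<lambda>j. tail nxt (?w j)) ` {..<?k}) = card ?T" using distinct_card[OF hs(4)] by simp
  moreover have "(\<lambda>j. tail nxt (?w j)) ` {..<?k} \<subseteq> ?T" using sub by blast
  ultimately show ?thesis using card_subset_eq[of ?T] by simp
qed

lemma W_no_cycle: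
  assumes i: "i < d"
  shows "\<not> has_cycle opp nxt (W i)"
proof
  assume "has_cycle opp nxt (W i)"
  then obtain hs where hs: "hs \<noteq> []" "set hs \<subseteq> W i \<union> opp ` W i"
    "distinct (map (\<lambda>h. {h, opp h}) hs)" "distinct (map (tail nxt) hs)"
    "\<forall>j<length hs. head opp nxt (hs ! j) = tail nxt (hs ! (Suc j mod length hs))"
    unfolding has_cycle_def by blast
  let ?T = "set (map (tail nxt) hs)" and ?w = "\<lambda>j. edge_arc i (hs ! j)"
  have tails: "\<exists>j<length hs. y = tail nxt (?w j)" if "y \<in> ?T" for y
  proof -
    have "y \<in> (\<lambda>j. tail nxt (?w j)) ` {..<length hs}" using tails_edge_arc_cycle[OF i hs] that by simp
    then show ?thesis by blast
  qed
  have W: "?w j \<in> W i" if "j < length hs" for j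
    using edge_arc_in_W[OF i] hs(2) nth_mem[OF that] by blast
  have T: "y \<in> vertices H nxt" "y \<noteq> vt i" if y: "y \<in> ?T" for y
  proof -
    obtain j where j: "j < length hs" "y = tail nxt (?w j)" using tails[OF y] by blast
    show "y \<in> vertices H nxt" "y \<noteq> vt i"
      using j(2) tail_in_vertices subsetD[OF W_subset[OF i] W[OF j(1)]] W_tail_neq_root[OF i W[OF j(1)]] by simp_all
  qed
  have closed: "parent i y \<in> ?T" if y: "y \<in> ?T" for y
  proof -
    obtain j where j: "j < length hs" "y = tail nxt (?w j)" using tails[OF y] by blast
    have "?w j = out i y" using out_eqI[OF i T[OF y] W[OF j(1)]] j(2) by simp
    then have parent: "parent i y = tail nxt (opp (?w j))" unfolding parent_def by simp
    have "hs ! j \<in> H" using W_opp_subset_H[OF i] hs(2) nth_mem[OF j(1)] by blast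
    show ?thesis
    proof (cases "hs ! j \<in> W i")
      case True
      have "tail nxt (opp (hs ! j)) = tail nxt (hs ! (Suc j mod length hs))"
        using hs(5) j(1) unfolding head_def by blast
      moreover have "Suc j mod length hs < length hs" using hs(1) by simp
      then have "tail nxt (hs ! (Suc j mod length hs)) \<in> ?T" using nth_mem by simp
      ultimately show ?thesis using parent True unfolding edge_arc_def by simp
    next
      case False
      then have "opp (?w j) = hs ! j" unfolding edge_arc_def using \<open>hs ! j \<in> H\<close> by simp
      then show ?thesis using parent nth_mem[OF j(1)] by simp
    qed
  qed
  have "finite ?T" "?T \<subseteq> vertices H nxt" "vt i \<notin> ?T" using T by auto
  moreover have "tail nxt (hd hs) \<in> ?T" using hs(1) by simp
  ultimately show False using no_closed_set_avoiding_root[OF i _ _ _ closed] by blast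
qed

theorem spanning_tree_W:
  assumes i: "i < d"
  shows "spanning_tree_toward H opp nxt (W i) (outer_vertex nxt ou i)"
proof -
  let ?R = "dir_rel opp nxt (W i)"
  have "\<forall>u\<in>vertices H nxt. (u, vt i) \<in> ?R\<^sup>*" using reaches_root_dir_rel[OF i] by blast
  moreover have "?R\<^sup>* \<subseteq> (?R \<union> ?R\<inverse>)\<^sup>*" by (rule rtrancl_mono) blast
  ultimately show ?thesis unfolding spanning_tree_toward_def outer_vertex_eq_vt
    using W_subset[OF i] no_opposite_arcs[OF i] W_no_cycle[OF i] by blast
qed

end

theorem mainTheorem9:
  fixes d :: nat and H :: "'a set" and opp nxt :: "'a \<Rightarrow> 'a"
    and ou :: "nat \<Rightarrow> 'a" and W :: "nat \<Rightarrow> 'a set"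
  assumes "3 \<le> d"
    and "d_map d H opp nxt ou"
    and "W0 d H opp nxt ou W"
    and "W1 d H opp nxt ou W"
    and "W2 d H opp nxt ou W"
  shows "\<forall>i<d. spanning_tree_toward H opp nxt (W i) (outer_vertex nxt ou i)"
proof -
  interpret wood d H opp nxt ou W using assms by unfold_locales
  show ?thesis using spanning_tree_W by blast
qed

end
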